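(* In $L_2(\mathbb R)$ let $Df(x)=\sqrt2 f(2x)$ and $Tf(x)=f(x-1)$, and let $A=i(D+I)(D-I)^{-1}$ (a self-adjoint operator). Let $S$ be a simple Phillips symmetric operator which is a restriction of $A$, and let $\psi\in\mathfrak N_{-i}=\ker(S^*+iI)$ be such that $\{T^k\psi\}_{k\in\mathbb Z}$ is an orthonormal basis of $\mathfrak N_{-i}$. Then $\psi$ is a wavelet, i.e. $\{D^jT^k\psi\}_{j,k\in\mathbb Z}=\{2^{j/2}\psi(2^jx-k)\}_{j,k\in\mathbb Z}$ is an orthonormal basis of $L_2(\mathbb R)$.
   Context: A closed densely defined symmetric operator $S$ with equal nonzero defect numbers is a Phillips symmetric operator (PSO) if its characteristic function is constant on $\mathbb C_+$, where for a boundary triplet $(\mathcal H,\Gamma_-,\Gamma_+)$ of $S^*$ ($\Gamma_\pm:\mathcal D(S^* )\to\mathcal H$ linear, $(S^*f,g)-(f,S^*g)=i[(\Gamma_+f,\Gamma_+g)-(\Gamma_-f,\Gamma_-g)]$, $(\Gamma_-,\Gamma_+)$ onto $\mathcal H\oplus\mathcal H$) the characteristic function is the bounded $\Theta(\lambda)$ with $\mathcal D(S)\dotplus\ker(S^*-\lambda I)=\{f\in\mathcal D(S^* ):\Theta(\lambda)\Gamma_+f=\Gamma_-f\}$, $\lambda\in\mathbb C_+$. Simple: no nontrivial reducing subspace on which the restriction is self-adjoint. *)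

theory Defs
  imports "HOL-Analysis.Analysis"
begin

text \<open>Elements of L_2(R) are represented by square-integrable Borel functions
  real => complex; equality in L_2 is equality almost everywhere (aeq).
  Possibly unbounded linear operators are represented by their graphs.\<close>

type_synonym cfun = "real \<Rightarrow> complex"

definition L2 :: "cfun set" where
  "L2 = {f. f \<in> borel_measurable lborel \<and> integrable lborel (\<lambda>x. (cmod (f x))^2)}"

definition aeq :: "cfun \<Rightarrow> cfun \<Rightarrow> bool" where
  "aeq f g \<longleftrightarrow> (AE x in lborel. f x = g x)"

definition l2_inner :: "cfun \<Rightarrow> cfun \<Rightarrow> complex" where
  "l2_inner f g = integral\<^sup>L lborel (\<lambda>x. f x * cnj (g x))"

definition l2_norm :: "cfun \<Rightarrow> real" where
  "l2_norm f = sqrt (integral\<^sup>L lborel (\<lambda>x. (cmod (f x))^2))"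

definition l2_conv :: "(nat \<Rightarrow> cfun) \<Rightarrow> cfun \<Rightarrow> bool" where
  "l2_conv fs f \<longleftrightarrow> (\<lambda>n. l2_norm (\<lambda>x. fs n x - f x)) \<longlonglongrightarrow> 0"

definition l2_subspace :: "cfun set \<Rightarrow> bool" where
  "l2_subspace M \<longleftrightarrow> M \<subseteq> L2 \<and> (\<lambda>x. 0) \<in> M
     \<and> (\<forall>f\<in>M. \<forall>g\<in>M. (\<lambda>x. f x + g x) \<in> M)
     \<and> (\<forall>c. \<forall>f\<in>M. (\<lambda>x. c * f x) \<in> M)
     \<and> (\<forall>f\<in>M. \<forall>g\<in>L2. aeq f g \<longrightarrow> g \<in> M)"

definition closed_l2_subspace :: "cfun set \<Rightarrow> bool" where
  "closed_l2_subspace M \<longleftrightarrow> l2_subspace M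
     \<and> (\<forall>fs f. (\<forall>n. fs n \<in> M) \<and> f \<in> L2 \<and> l2_conv fs f \<longrightarrow> f \<in> M)"

definition l2_orth :: "cfun set \<Rightarrow> cfun set" where
  "l2_orth M = {g \<in> L2. \<forall>f\<in>M. l2_inner f g = 0}"

definition onb_family :: "cfun set \<Rightarrow> 'k set \<Rightarrow> ('k \<Rightarrow> cfun) \<Rightarrow> bool" where
  "onb_family M I e \<longleftrightarrow> (\<forall>k\<in>I. e k \<in> M)
     \<and> (\<forall>k\<in>I. \<forall>l\<in>I. l2_inner (e k) (e l) = (if k = l then 1 else 0))
     \<and> (\<forall>g\<in>M. \<forall>\<epsilon>>0. \<exists>F c. finite F \<and> F \<subseteq> I
            \<and> l2_norm (\<lambda>x. g x - (\<Sum>k\<in>F. c k * e k x)) < \<epsilon>)"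

definition l2_op :: "(cfun \<times> cfun) set \<Rightarrow> bool" where
  "l2_op G \<longleftrightarrow> G \<subseteq> L2 \<times> L2 \<and> ((\<lambda>x. 0), (\<lambda>x. 0)) \<in> G
     \<and> (\<forall>(f,h)\<in>G. \<forall>(g,k)\<in>G. ((\<lambda>x. f x + g x), (\<lambda>x. h x + k x)) \<in> G)
     \<and> (\<forall>c. \<forall>(f,h)\<in>G. ((\<lambda>x. c * f x), (\<lambda>x. c * h x)) \<in> G)
     \<and> (\<forall>(f,h)\<in>G. \<forall>f'\<in>L2. \<forall>h'\<in>L2. aeq f f' \<and> aeq h h' \<longrightarrow> (f',h') \<in> G)
     \<and> (\<forall>(f,h)\<in>G. aeq f (\<lambda>x. 0) \<longrightarrow> aeq h (\<lambda>x. 0))"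

definition densely_defined :: "(cfun \<times> cfun) set \<Rightarrow> bool" where
  "densely_defined G \<longleftrightarrow> (\<forall>g\<in>L2. \<forall>\<epsilon>>0. \<exists>f\<in>Domain G. l2_norm (\<lambda>x. f x - g x) < \<epsilon>)"

definition closed_op :: "(cfun \<times> cfun) set \<Rightarrow> bool" where
  "closed_op G \<longleftrightarrow> (\<forall>fs hs f h. (\<forall>n. (fs n, hs n) \<in> G) \<and> f \<in> L2 \<and> h \<in> L2
      \<and> l2_conv fs f \<and> l2_conv hs h \<longrightarrow> (f, h) \<in> G)"

definition adjoint_op :: "(cfun \<times> cfun) set \<Rightarrow> (cfun \<times> cfun) set" where
  "adjoint_op G = {(g,k). g \<in> L2 \<and> k \<in> L2 \<and> (\<forall>(f,h)\<in>G. l2_inner h g = l2_inner f k)}"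

definition symmetric_op :: "(cfun \<times> cfun) set \<Rightarrow> bool" where
  "symmetric_op G \<longleftrightarrow> G \<subseteq> adjoint_op G"

definition defect_space :: "(cfun \<times> cfun) set \<Rightarrow> complex \<Rightarrow> cfun set" where
  "defect_space G \<mu> = {g. (g, (\<lambda>x. \<mu> * g x)) \<in> adjoint_op G}"

definition equal_nonzero_defect :: "(cfun \<times> cfun) set \<Rightarrow> bool" where
  "equal_nonzero_defect G \<longleftrightarrow> (\<exists>B1 B2. onb_family (defect_space G \<i>) B1 id
      \<and> onb_family (defect_space G (- \<i>)) B2 id \<and> B1 \<noteq> {} \<and> (\<exists>\<phi>. bij_betw \<phi> B1 B2))"

definition l2seq :: "('i \<Rightarrow> complex) set" where
  "l2seq = {v. (\<lambda>i. (cmod (v i))^2) summable_on UNIV}"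

definition seq_inner :: "('i \<Rightarrow> complex) \<Rightarrow> ('i \<Rightarrow> complex) \<Rightarrow> complex" where
  "seq_inner v w = (\<Sum>\<^sub>\<infinity>i. v i * cnj (w i))"

definition seq_norm :: "('i \<Rightarrow> complex) \<Rightarrow> real" where
  "seq_norm v = sqrt (\<Sum>\<^sub>\<infinity>i. (cmod (v i))^2)"

definition bounded_seq_op :: "(('i \<Rightarrow> complex) \<Rightarrow> ('i \<Rightarrow> complex)) \<Rightarrow> bool" where
  "bounded_seq_op \<Theta> \<longleftrightarrow> (\<forall>v\<in>l2seq. \<Theta> v \<in> l2seq)
     \<and> (\<forall>v\<in>l2seq. \<forall>w\<in>l2seq. \<Theta> (\<lambda>i. v i + w i) = (\<lambda>i. \<Theta> v i + \<Theta> w i))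
     \<and> (\<forall>c. \<forall>v\<in>l2seq. \<Theta> (\<lambda>i. c * v i) = (\<lambda>i. c * \<Theta> v i))
     \<and> (\<exists>C. \<forall>v\<in>l2seq. seq_norm (\<Theta> v) \<le> C * seq_norm v)"

definition boundary_triplet :: "(cfun \<times> cfun) set \<Rightarrow> (cfun \<Rightarrow> 'i \<Rightarrow> complex)
    \<Rightarrow> (cfun \<Rightarrow> 'i \<Rightarrow> complex) \<Rightarrow> bool" where
  "boundary_triplet S Gm Gp \<longleftrightarrow>
     (\<forall>f\<in>Domain (adjoint_op S). Gm f \<in> l2seq \<and> Gp f \<in> l2seq)
   \<and> (\<forall>f\<in>Domain (adjoint_op S). \<forall>g\<in>Domain (adjoint_op S).
        Gm (\<lambda>x. f x + g x) = (\<lambda>i. Gm f i + Gm g i) \<and> Gp (\<lambda>x. f x + g x) = (\<lambda>i. Gp f i + Gp g i))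
   \<and> (\<forall>c. \<forall>f\<in>Domain (adjoint_op S).
        Gm (\<lambda>x. c * f x) = (\<lambda>i. c * Gm f i) \<and> Gp (\<lambda>x. c * f x) = (\<lambda>i. c * Gp f i))
   \<and> (\<forall>f\<in>Domain (adjoint_op S). aeq f (\<lambda>x. 0) \<longrightarrow> Gm f = (\<lambda>i. 0) \<and> Gp f = (\<lambda>i. 0))
   \<and> (\<forall>(f,h)\<in>adjoint_op S. \<forall>(g,k)\<in>adjoint_op S.
        l2_inner h g - l2_inner f k = \<i> * (seq_inner (Gp f) (Gp g) - seq_inner (Gm f) (Gm g)))
   \<and> (\<forall>u\<in>l2seq. \<forall>v\<in>l2seq. \<exists>f\<in>Domain (adjoint_op S). Gm f = u \<and> Gp f = v)"

definition is_char_fun_value :: "(cfun \<times> cfun) set \<Rightarrow> (cfun \<Rightarrow> 'i \<Rightarrow> complex)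
    \<Rightarrow> (cfun \<Rightarrow> 'i \<Rightarrow> complex) \<Rightarrow> complex \<Rightarrow> (('i \<Rightarrow> complex) \<Rightarrow> ('i \<Rightarrow> complex)) \<Rightarrow> bool" where
  "is_char_fun_value S Gm Gp \<mu> \<Theta> \<longleftrightarrow> bounded_seq_op \<Theta>
     \<and> {f \<in> L2. \<exists>g h. g \<in> Domain S \<and> h \<in> defect_space S \<mu> \<and> aeq f (\<lambda>x. g x + h x)}
       = {f \<in> Domain (adjoint_op S). \<Theta> (Gp f) = Gm f}"

definition phillips_symmetric :: "(cfun \<times> cfun) set \<Rightarrow> (cfun \<Rightarrow> 'i \<Rightarrow> complex)
    \<Rightarrow> (cfun \<Rightarrow> 'i \<Rightarrow> complex) \<Rightarrow> bool" where
  "phillips_symmetric S Gm Gp \<longleftrightarrow> l2_op S \<and> closed_op S \<and> densely_defined S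
     \<and> symmetric_op S \<and> equal_nonzero_defect S \<and> boundary_triplet S Gm Gp
     \<and> (\<exists>\<Theta>. \<forall>\<mu>. Im \<mu> > 0 \<longrightarrow> is_char_fun_value S Gm Gp \<mu> \<Theta>)"

definition reduces :: "(cfun \<times> cfun) set \<Rightarrow> cfun set \<Rightarrow> bool" where
  "reduces S M \<longleftrightarrow> closed_l2_subspace M \<and> (\<forall>(f,h)\<in>S. \<forall>f1 f2. f1 \<in> M \<and> f2 \<in> l2_orth M
      \<and> aeq f (\<lambda>x. f1 x + f2 x) \<longrightarrow>
      (\<exists>h1 h2. (f1,h1) \<in> S \<and> h1 \<in> M \<and> (f2,h2) \<in> S \<and> h2 \<in> l2_orth M))"

definition selfadjoint_in :: "cfun set \<Rightarrow> (cfun \<times> cfun) set \<Rightarrow> bool" where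
  "selfadjoint_in M G \<longleftrightarrow>
     G = {(g,k). g \<in> M \<and> k \<in> M \<and> (\<forall>(f,h)\<in>G. l2_inner h g = l2_inner f k)}"

definition simple_op :: "(cfun \<times> cfun) set \<Rightarrow> bool" where
  "simple_op S \<longleftrightarrow> \<not> (\<exists>M. reduces S M \<and> (\<exists>f\<in>M. \<not> aeq f (\<lambda>x. 0))
                          \<and> selfadjoint_in M (S \<inter> (M \<times> M)))"

definition Dil :: "cfun \<Rightarrow> cfun" where
  "Dil f = (\<lambda>x. complex_of_real (sqrt 2) * f (2 * x))"

definition Dpow :: "int \<Rightarrow> cfun \<Rightarrow> cfun" where
  "Dpow j f = (\<lambda>x. complex_of_real (2 powr (real_of_int j / 2)) * f (2 powr real_of_int j * x))"

definition Tpow :: "int \<Rightarrow> cfun \<Rightarrow> cfun" where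
  "Tpow k f = (\<lambda>x. f (x - real_of_int k))"

definition A_graph :: "(cfun \<times> cfun) set" where
  "A_graph = {(f,h). f \<in> L2 \<and> h \<in> L2 \<and> (\<exists>g\<in>L2. aeq f (\<lambda>x. Dil g x - g x)
                \<and> aeq h (\<lambda>x. \<i> * (Dil g x + g x)))}"

end

theory Submission
  imports Defs
begin

(*
  The defect space \<N>\<^sub>-\<^sub>i of S is the orthogonal complement of the set of those g with
  ((D - I) g, i (D + I) g) \<in> S, and \<N>\<^sub>i = D \<N>\<^sub>-\<^sub>i.  Constancy of the characteristic function
  gives \<N>\<^sub>i \<subseteq> D(S) + \<N>\<^sub>\<mu> for every \<mu> in the upper half-plane; for \<mu> = i (1 - q) / (1 + q)
  this produces, for h \<in> \<N>\<^sub>i, some admissible g with g = q (h - D g).  Iterating that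
  identity bounds \<langle>D\<^sup>n h, v\<rangle> by O(q) for v \<in> \<N>\<^sub>-\<^sub>i, so D\<^sup>n\<^sup>+\<^sup>1 \<N>\<^sub>-\<^sub>i \<perp> \<N>\<^sub>-\<^sub>i and the family
  D\<^sup>j T\<^sup>k \<psi> is orthonormal.  Its orthogonal complement is invariant under D and consists of
  admissible g, so it reduces S and S is self-adjoint there; simplicity makes it trivial.
*)

section \<open>Square-integrable functions\<close>

lemma borel_measurable_cnj [measurable (raw)]:
  "f \<in> borel_measurable M \<Longrightarrow> (\<lambda>x. cnj (f x)) \<in> borel_measurable M"
  by (rule borel_measurable_continuous_on[where f = cnj]) (auto intro: continuous_intros)

lemma L2D:
  assumes "f \<in> L2"
  shows "f \<in> borel_measurable lborel" "integrable lborel (\<lambda>x. (cmod (f x))^2)"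
  using assms by (auto simp: L2_def)

lemma L2I: "f \<in> borel_measurable lborel \<Longrightarrow> integrable lborel (\<lambda>x. (cmod (f x))^2) \<Longrightarrow> f \<in> L2"
  by (auto simp: L2_def)

lemma L2_borel_measurable: "f \<in> L2 \<Longrightarrow> f \<in> borel_measurable borel"
  using L2D(1) by (simp add: measurable_lborel1)

lemma mult_le_weighted_squares:
  fixes a b t :: real
  assumes "t > 0"
  shows "a * b \<le> (t * a^2 + b^2 / t) / 2"
proof -
  have "2 * t * (a * b) \<le> t^2 * a^2 + b^2"
    using zero_le_power2[of "t * a - b"] by (simp add: power2_eq_square algebra_simps)
  with assms show ?thesis by (simp add: field_simps power2_eq_square)
qed

lemma integrable_l2_product:
  assumes "f \<in> L2" "g \<in> L2"
  shows "integrable lborel (\<lambda>x. f x * cnj (g x))"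
proof (rule Bochner_Integration.integrable_bound)
  note [measurable] = L2D(1)[OF assms(1)] L2D(1)[OF assms(2)]
  show "integrable lborel (\<lambda>x. (cmod (f x))^2 + (cmod (g x))^2)"
    using L2D(2)[OF assms(1)] L2D(2)[OF assms(2)] by auto
  show "(\<lambda>x. f x * cnj (g x)) \<in> borel_measurable lborel" by measurable
  show "AE x in lborel. norm (f x * cnj (g x)) \<le> norm ((cmod (f x))^2 + (cmod (g x))^2)"
    using mult_le_weighted_squares[of 1 "cmod (f x)" "cmod (g x)" for x]
    by (intro AE_I2) (simp add: norm_mult, smt (verit) norm_ge_zero mult_nonneg_nonneg)
qed

lemma L2_add:
  assumes "f \<in> L2" "g \<in> L2"
  shows "(\<lambda>x. f x + g x) \<in> L2"
proof (rule L2I)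
  note [measurable] = L2D(1)[OF assms(1)] L2D(1)[OF assms(2)]
  show "(\<lambda>x. f x + g x) \<in> borel_measurable lborel" by measurable
  show "integrable lborel (\<lambda>x. (cmod (f x + g x))^2)"
  proof (rule Bochner_Integration.integrable_bound)
    show "integrable lborel (\<lambda>x. 2 * (cmod (f x))^2 + 2 * (cmod (g x))^2)"
      using L2D(2)[OF assms(1)] L2D(2)[OF assms(2)] by auto
    have "(cmod (f x + g x))^2 \<le> 2 * (cmod (f x))^2 + 2 * (cmod (g x))^2" for x
    proof -
      have "(cmod (f x + g x))^2 \<le> (cmod (f x) + cmod (g x))^2"
        by (simp add: power_mono norm_triangle_ineq)
      also have "\<dots> \<le> 2 * (cmod (f x))^2 + 2 * (cmod (g x))^2"
        using mult_le_weighted_squares[of 1 "cmod (f x)" "cmod (g x)"] by (simp add: power2_sum)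
      finally show ?thesis .
    qed
    then show "AE x in lborel. norm ((cmod (f x + g x))^2) \<le> norm (2 * (cmod (f x))^2 + 2 * (cmod (g x))^2)"
      by (intro AE_I2) simp
  qed measurable
qed

lemma L2_scale: "f \<in> L2 \<Longrightarrow> (\<lambda>x. c * f x) \<in> L2"
  by (rule L2I) (auto dest: L2D simp: norm_mult power_mult_distrib)

lemma L2_zero: "(\<lambda>x. 0) \<in> L2"
  by (rule L2I) auto

lemma L2_diff: "f \<in> L2 \<Longrightarrow> g \<in> L2 \<Longrightarrow> (\<lambda>x. f x - g x) \<in> L2"
  using L2_add[OF _ L2_scale, of f g "-1"] by simp

lemma L2_sum: "(\<And>k. k \<in> F \<Longrightarrow> e k \<in> L2) \<Longrightarrow> (\<lambda>x. \<Sum>k\<in>F. c k * e k x) \<in> L2"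
  by (induction F rule: infinite_finite_induct) (auto intro!: L2_add L2_scale simp: L2_zero)

lemma aeq_refl [simp]: "aeq f f"
  by (simp add: aeq_def)

lemma aeq_sym: "aeq f g \<Longrightarrow> aeq g f"
  unfolding aeq_def by (auto elim: AE_mp)

lemma aeq_trans: "aeq f g \<Longrightarrow> aeq g h \<Longrightarrow> aeq f h"
  unfolding aeq_def by (erule AE_mp, erule AE_mp) auto

lemma aeq_diff_eq_0_iff: "aeq (\<lambda>x. f x - g x) (\<lambda>x. 0) \<longleftrightarrow> aeq f g"
  by (simp add: aeq_def)

section \<open>Inner product and norm\<close>

lemma l2_inner_add_left:
  "f \<in> L2 \<Longrightarrow> g \<in> L2 \<Longrightarrow> h \<in> L2 \<Longrightarrow> l2_inner (\<lambda>x. f x + g x) h = l2_inner f h + l2_inner g h"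
  unfolding l2_inner_def by (simp add: distrib_right integrable_l2_product)

lemma l2_inner_add_right:
  "f \<in> L2 \<Longrightarrow> g \<in> L2 \<Longrightarrow> h \<in> L2 \<Longrightarrow> l2_inner h (\<lambda>x. f x + g x) = l2_inner h f + l2_inner h g"
  unfolding l2_inner_def by (simp add: distrib_left integrable_l2_product)

lemma l2_inner_diff_left:
  "f \<in> L2 \<Longrightarrow> g \<in> L2 \<Longrightarrow> h \<in> L2 \<Longrightarrow> l2_inner (\<lambda>x. f x - g x) h = l2_inner f h - l2_inner g h"
  unfolding l2_inner_def by (simp add: left_diff_distrib integrable_l2_product)

lemma l2_inner_diff_right:
  "f \<in> L2 \<Longrightarrow> g \<in> L2 \<Longrightarrow> h \<in> L2 \<Longrightarrow> l2_inner h (\<lambda>x. f x - g x) = l2_inner h f - l2_inner h g"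
  unfolding l2_inner_def by (simp add: right_diff_distrib integrable_l2_product)

lemma l2_inner_scale_left: "l2_inner (\<lambda>x. c * f x) g = c * l2_inner f g"
  unfolding l2_inner_def by (simp add: mult.assoc)

lemma l2_inner_scale_right: "l2_inner g (\<lambda>x. c * f x) = cnj c * l2_inner g f"
  unfolding l2_inner_def by (simp add: mult.left_commute)

lemma l2_inner_commute: "l2_inner g f = cnj (l2_inner f g)"
proof -
  have "cnj (l2_inner f g) = integral\<^sup>L lborel (\<lambda>x. cnj (f x * cnj (g x)))"
    unfolding l2_inner_def by (rule Bochner_Integration.integral_cnj[symmetric])
  then show ?thesis by (simp add: l2_inner_def mult.commute)
qed

lemma l2_inner_eq_0_swap: "l2_inner f g = 0 \<Longrightarrow> l2_inner g f = 0"
  by (simp add: l2_inner_commute[of g f])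

lemma l2_inner_zero_left [simp]: "l2_inner (\<lambda>x. 0) g = 0"
  by (simp add: l2_inner_def)

lemma l2_inner_sum_left:
  assumes "g \<in> L2" "\<And>k. k \<in> F \<Longrightarrow> e k \<in> L2"
  shows "l2_inner (\<lambda>x. \<Sum>k\<in>F. c k * e k x) g = (\<Sum>k\<in>F. c k * l2_inner (e k) g)"
  using assms(2)
  by (induction F rule: infinite_finite_induct)
    (simp_all add: l2_inner_add_left[OF L2_scale L2_sum] assms(1) l2_inner_scale_left)

lemma l2_inner_cong_aeq_left:
  assumes "f \<in> L2" "f' \<in> L2" "g \<in> L2" "aeq f f'"
  shows "l2_inner f g = l2_inner f' g"
  unfolding l2_inner_def
proof (rule integral_cong_AE)
  show "AE x in lborel. f x * cnj (g x) = f' x * cnj (g x)"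
    using assms(4) unfolding aeq_def by eventually_elim simp
qed (use integrable_l2_product assms in auto)

lemma l2_inner_cong_aeq_right:
  "f \<in> L2 \<Longrightarrow> f' \<in> L2 \<Longrightarrow> g \<in> L2 \<Longrightarrow> aeq f f' \<Longrightarrow> l2_inner g f = l2_inner g f'"
  by (metis l2_inner_cong_aeq_left l2_inner_commute)

lemma l2_norm_nonneg [simp]: "l2_norm f \<ge> 0"
  by (simp add: l2_norm_def)

lemma l2_norm_sq: "(l2_norm f)^2 = integral\<^sup>L lborel (\<lambda>x. (cmod (f x))^2)"
  by (simp add: l2_norm_def)

lemma l2_inner_self: "l2_inner f f = complex_of_real ((l2_norm f)^2)"
proof -
  have sq: "(\<lambda>x. f x * cnj (f x)) = (\<lambda>x. complex_of_real ((cmod (f x))^2))"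
    by (rule ext) (metis complex_norm_square of_real_power)
  have "integral\<^sup>L lborel (\<lambda>x. (cmod (f x))^2) \<ge> 0" by simp
  then show ?thesis
    unfolding l2_inner_def l2_norm_def sq integral_complex_of_real by simp
qed

lemma l2_norm_sq_eq_Re: "(l2_norm f)^2 = Re (l2_inner f f)"
  by (simp add: l2_inner_self)

lemma l2_norm_eq_0_iff:
  assumes "f \<in> L2"
  shows "l2_norm f = 0 \<longleftrightarrow> aeq f (\<lambda>x. 0)"
proof -
  have "l2_norm f = 0 \<longleftrightarrow> integral\<^sup>L lborel (\<lambda>x. (cmod (f x))^2) = 0"
    by (simp add: l2_norm_def)
  also have "\<dots> \<longleftrightarrow> (AE x in lborel. (cmod (f x))^2 = 0)"
    using L2D(2)[OF assms] by (intro integral_nonneg_eq_0_iff_AE) auto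
  finally show ?thesis by (simp add: aeq_def)
qed

lemma l2_inner_self_eq_0D: "f \<in> L2 \<Longrightarrow> l2_inner f f = 0 \<Longrightarrow> aeq f (\<lambda>x. 0)"
  by (simp add: l2_inner_self l2_norm_eq_0_iff)

lemma l2_norm_cong_aeq:
  assumes "f \<in> L2" "g \<in> L2" "aeq f g"
  shows "l2_norm f = l2_norm g"
proof -
  have "l2_inner f f = l2_inner g g"
    using l2_inner_cong_aeq_left[OF assms(1,2,1,3)] l2_inner_cong_aeq_right[OF assms(1,2,2,3)] by simp
  then have "(l2_norm f)^2 = (l2_norm g)^2"
    by (simp add: l2_norm_sq_eq_Re)
  then show ?thesis by (simp add: power2_eq_iff_nonneg)
qed

lemma l2_norm_scale: "l2_norm (\<lambda>x. c * f x) = cmod c * l2_norm f"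
  by (simp add: l2_norm_def norm_mult power_mult_distrib real_sqrt_mult)

lemma l2_norm_minus [simp]: "l2_norm (\<lambda>x. - f x) = l2_norm f"
  using l2_norm_scale[of "-1" f] by simp

lemma l2_inner_minus_right [simp]: "l2_inner g (\<lambda>x. - f x) = - l2_inner g f"
  using l2_inner_scale_right[of g "-1" f] by simp

lemma l2_norm_diff_commute: "l2_norm (\<lambda>x. f x - g x) = l2_norm (\<lambda>x. g x - f x)"
  using l2_norm_scale[of "-1" "\<lambda>x. f x - g x"] by simp

lemma l2_Cauchy_Schwarz:
  assumes "f \<in> L2" "g \<in> L2"
  shows "cmod (l2_inner f g) \<le> l2_norm f * l2_norm g"
proof (cases "l2_norm f = 0 \<or> l2_norm g = 0")
  case True
  then have "l2_inner f g = 0"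
    using assms l2_inner_cong_aeq_left[OF _ L2_zero] l2_inner_cong_aeq_right[OF _ L2_zero]
    by (auto simp: l2_norm_eq_0_iff l2_inner_def)
  then show ?thesis by simp
next
  case False
  define t where "t = l2_norm g / l2_norm f"
  have t: "t > 0" using False by (simp add: t_def less_le)
  note [measurable] = L2D(1)[OF assms(1)] L2D(1)[OF assms(2)]
  have "cmod (l2_inner f g) \<le> integral\<^sup>L lborel (\<lambda>x. norm (f x * cnj (g x)))"
    unfolding l2_inner_def by (rule integral_norm_bound)
  also have "\<dots> \<le> integral\<^sup>L lborel (\<lambda>x. (t * (cmod (f x))^2 + (cmod (g x))^2 / t) / 2)"
    using integrable_norm[OF integrable_l2_product[OF assms]] L2D(2)[OF assms(1)] L2D(2)[OF assms(2)]
      mult_le_weighted_squares[OF t]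
    by (intro integral_mono) (auto simp: norm_mult)
  also have "\<dots> = (t * (l2_norm f)^2 + (l2_norm g)^2 / t) / 2"
    using L2D(2)[OF assms(1)] L2D(2)[OF assms(2)] by (simp add: l2_norm_sq)
  also have "\<dots> = l2_norm f * l2_norm g"
    using False by (simp add: t_def power2_eq_square field_simps)
  finally show ?thesis .
qed

lemma l2_norm_add_sq:
  assumes "f \<in> L2" "g \<in> L2"
  shows "(l2_norm (\<lambda>x. f x + g x))^2 = (l2_norm f)^2 + (l2_norm g)^2 + 2 * Re (l2_inner f g)"
proof -
  have "l2_inner (\<lambda>x. f x + g x) (\<lambda>x. f x + g x) = l2_inner f f + l2_inner g g + (l2_inner f g + cnj (l2_inner f g))"
    using assms L2_add[OF assms]
    by (simp add: l2_inner_add_left l2_inner_add_right l2_inner_commute[of g f])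
  then show ?thesis
    by (simp add: l2_norm_sq_eq_Re)
qed

lemma l2_norm_diff_sq:
  assumes "f \<in> L2" "g \<in> L2"
  shows "(l2_norm (\<lambda>x. f x - g x))^2 = (l2_norm f)^2 + (l2_norm g)^2 - 2 * Re (l2_inner f g)"
  using l2_norm_add_sq[OF assms(1) L2_scale[OF assms(2)], of "-1"] by simp

lemma l2_norm_triangle:
  assumes "f \<in> L2" "g \<in> L2"
  shows "l2_norm (\<lambda>x. f x + g x) \<le> l2_norm f + l2_norm g"
proof -
  have "Re (l2_inner f g) \<le> l2_norm f * l2_norm g"
    using l2_Cauchy_Schwarz[OF assms] complex_Re_le_cmod order_trans by blast
  then have "(l2_norm (\<lambda>x. f x + g x))^2 \<le> (l2_norm f + l2_norm g)^2"
    using l2_norm_add_sq[OF assms] by (simp add: power2_sum)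
  then show ?thesis by (rule power2_le_imp_le) simp
qed

lemma l2_norm_diff_le:
  "f \<in> L2 \<Longrightarrow> g \<in> L2 \<Longrightarrow> l2_norm (\<lambda>x. f x - g x) \<le> l2_norm f + l2_norm g"
  using l2_norm_triangle[OF _ L2_scale, of f g "-1"] by simp

lemma l2_norm_diff_triangle:
  "f \<in> L2 \<Longrightarrow> g \<in> L2 \<Longrightarrow> h \<in> L2 \<Longrightarrow>
    l2_norm (\<lambda>x. f x - h x) \<le> l2_norm (\<lambda>x. f x - g x) + l2_norm (\<lambda>x. g x - h x)"
  using l2_norm_triangle[OF L2_diff L2_diff, of f g g h] by simp

lemma l2_inner_tendsto_left:
  assumes "\<And>n. fs n \<in> L2" "f \<in> L2" "g \<in> L2" "l2_conv fs f"
  shows "(\<lambda>n. l2_inner (fs n) g) \<longlonglongrightarrow> l2_inner f g"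
proof -
  have "(\<lambda>n. l2_norm (\<lambda>x. fs n x - f x) * l2_norm g) \<longlonglongrightarrow> 0 * l2_norm g"
    using assms(4) unfolding l2_conv_def by (intro tendsto_mult tendsto_const)
  moreover have "cmod (l2_inner (fs n) g - l2_inner f g) \<le> l2_norm (\<lambda>x. fs n x - f x) * l2_norm g" for n
    using l2_Cauchy_Schwarz[OF L2_diff[OF assms(1,2)] assms(3)] l2_inner_diff_left[OF assms(1-3)] by simp
  ultimately have "(\<lambda>n. l2_inner (fs n) g - l2_inner f g) \<longlonglongrightarrow> 0"
    using Lim_null_comparison[OF always_eventually, of "\<lambda>n. l2_inner (fs n) g - l2_inner f g"
        "\<lambda>n. l2_norm (\<lambda>x. fs n x - f x) * l2_norm g"] by simp
  then show ?thesis by (simp add: LIM_zero_iff)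
qed

section \<open>Completeness and orthogonal projection\<close>

lemma l2_Cauchy_fast_subseq:
  fixes fs :: "nat \<Rightarrow> cfun"
  assumes "\<And>e. e > 0 \<Longrightarrow> \<exists>N. \<forall>m\<ge>N. \<forall>n\<ge>N. l2_norm (\<lambda>x. fs m x - fs n x) < e"
  obtains r where "strict_mono r" "\<And>k m. r k \<le> m \<Longrightarrow> l2_norm (\<lambda>x. fs m x - fs (r k) x) < (1/4)^k"
proof -
  have "\<forall>k::nat. \<exists>N. \<forall>m\<ge>N. \<forall>n\<ge>N. l2_norm (\<lambda>x. fs m x - fs n x) < (1/4)^k"
    using assms by simp
  then obtain N where N: "\<And>k m n. N k \<le> m \<Longrightarrow> N k \<le> n \<Longrightarrow> l2_norm (\<lambda>x. fs m x - fs n x) < (1/4)^k"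
    by metis
  define r where "r = rec_nat (N 0) (\<lambda>k rk. max (Suc rk) (N (Suc k)))"
  have r_Suc: "r (Suc k) = max (Suc (r k)) (N (Suc k))" for k
    by (simp add: r_def)
  have N_le: "N k \<le> r k" for k
    by (cases k) (simp_all add: r_def)
  have "strict_mono r"
    by (rule strict_monoI_Suc) (simp add: r_Suc)
  moreover have "l2_norm (\<lambda>x. fs m x - fs (r k) x) < (1/4)^k" if "r k \<le> m" for k m
    using N[OF order_trans[OF N_le that] N_le] .
  ultimately show thesis
    by (rule that)
qed

lemma nn_integral_l2_norm_sq:
  "f \<in> L2 \<Longrightarrow> (\<integral>\<^sup>+x. ennreal ((cmod (f x))^2) \<partial>lborel) = ennreal ((l2_norm f)^2)"
  unfolding l2_norm_sq by (intro nn_integral_eq_integral) (auto dest: L2D)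

lemma summable_if_summable_weighted_sq:
  fixes a :: "nat \<Rightarrow> complex"
  assumes "summable (\<lambda>k. 2^k * (cmod (a k))^2)"
  shows "summable a"
proof (rule summable_norm_cancel)
  have "summable (\<lambda>k. (2^k * (cmod (a k))^2 + 1 / 2^k) / 2)"
    using assms summable_geometric[of "1/2::real"]
    by (intro summable_divide summable_add) (simp_all add: power_one_over)
  moreover have "norm (norm (a k)) \<le> (2^k * (cmod (a k))^2 + 1 / 2^k) / 2" for k
    using mult_le_weighted_squares[of "2^k" "cmod (a k)" 1] by simp
  ultimately show "summable (\<lambda>k. norm (a k))"
    by (rule summable_comparison_test')
qed

lemma AE_convergent_if_l2_fast:
  assumes L2: "\<And>k. phi k \<in> L2"
    and fast: "\<And>k. l2_norm (\<lambda>x. phi (Suc k) x - phi k x) \<le> (1/4)^k"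
  shows "AE x in lborel. convergent (\<lambda>k. phi k x)"
proof -
  define d where "d k x = phi (Suc k) x - phi k x" for k x
  have d_L2: "d k \<in> L2" for k
    unfolding d_def[abs_def] by (intro L2_diff L2)
  have [measurable]: "d k \<in> borel_measurable borel" for k
    using d_L2 L2_borel_measurable by blast
  define E where "E x = (\<Sum>k. ennreal (2^k * (cmod (d k x))^2))" for x
  have [measurable]: "E \<in> borel_measurable borel"
    unfolding E_def by measurable
  have "(\<integral>\<^sup>+x. E x \<partial>lborel) = (\<Sum>k. \<integral>\<^sup>+x. ennreal (2^k * (cmod (d k x))^2) \<partial>lborel)"
    unfolding E_def by (rule nn_integral_suminf) measurable
  also have "\<dots> = (\<Sum>k. ennreal (2^k * (l2_norm (d k))^2))"
  proof (rule arg_cong[where f = suminf], rule ext)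
    fix k
    have "(\<integral>\<^sup>+x. ennreal (2^k * (cmod (d k x))^2) \<partial>lborel)
        = (\<integral>\<^sup>+x. ennreal (2^k) * ennreal ((cmod (d k x))^2) \<partial>lborel)"
      by (simp add: ennreal_mult)
    also have "\<dots> = ennreal (2^k) * (\<integral>\<^sup>+x. ennreal ((cmod (d k x))^2) \<partial>lborel)"
      by (rule nn_integral_cmult) measurable
    finally show "(\<integral>\<^sup>+x. ennreal (2^k * (cmod (d k x))^2) \<partial>lborel) = ennreal (2^k * (l2_norm (d k))^2)"
      using nn_integral_l2_norm_sq[OF d_L2[of k]] by (simp add: ennreal_mult)
  qed
  also have "\<dots> \<le> (\<Sum>k. ennreal ((1/8)^k))"
  proof (intro suminf_le ennreal_leI summableI)
    fix k :: nat
    have "2^k * (l2_norm (d k))^2 \<le> 2^k * ((1/4)^k)^2"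
      using fast[of k] by (intro mult_left_mono power_mono) (auto simp: d_def[abs_def])
    also have "\<dots> = (1/8::real)^k"
      by (simp add: power2_eq_square power_mult_distrib[symmetric])
    finally show "2^k * (l2_norm (d k))^2 \<le> (1/8::real)^k" .
  qed
  also have "\<dots> = ennreal (\<Sum>k. (1/8)^k)"
  proof (rule suminf_ennreal)
    show "(\<Sum>k. ennreal ((1/8::real)^k)) \<noteq> top"
      by (rule ennreal_suminf_neq_top) (simp_all add: summable_geometric)
  qed simp
  finally have "(\<integral>\<^sup>+x. E x \<partial>lborel) \<noteq> \<infinity>"
    by (auto simp: top_unique)
  then have "AE x in lborel. E x \<noteq> \<infinity>"
    by (intro nn_integral_PInf_AE) auto
  then show ?thesis
  proof eventually_elim
    case (elim x)
    have "summable (\<lambda>k. 2^k * (cmod (d k x))^2)"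
      using elim unfolding E_def by (intro summable_suminf_not_top) auto
    then have "summable (\<lambda>k. d k x)"
      by (rule summable_if_summable_weighted_sq)
    then have "(\<lambda>k. phi 0 x + (\<Sum>j<k. d j x)) \<longlonglongrightarrow> phi 0 x + (\<Sum>j. d j x)"
      by (intro tendsto_add tendsto_const summable_LIMSEQ)
    moreover have "phi 0 x + (\<Sum>j<k. d j x) = phi k x" for k
      unfolding d_def using sum_lessThan_telescope[of "\<lambda>j. phi j x" k] by simp
    ultimately show ?case
      unfolding convergent_def by auto
  qed
qed

lemma l2_norm_limit_le:
  assumes L2: "\<And>m. phi m \<in> L2" "g \<in> L2"
    and lim: "AE x in lborel. (\<lambda>m. phi m x) \<longlonglongrightarrow> f x"
    and f [measurable]: "f \<in> borel_measurable borel"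
    and bound: "\<forall>\<^sub>F m in sequentially. l2_norm (\<lambda>x. phi m x - g x) \<le> c"
  shows "(\<lambda>x. f x - g x) \<in> L2" "l2_norm (\<lambda>x. f x - g x) \<le> c"
proof -
  have [measurable]: "phi m \<in> borel_measurable borel" "g \<in> borel_measurable borel" for m
    using L2 L2_borel_measurable by blast+
  have "(\<integral>\<^sup>+x. ennreal ((cmod (f x - g x))^2) \<partial>lborel)
      = (\<integral>\<^sup>+x. liminf (\<lambda>m. ennreal ((cmod (phi m x - g x))^2)) \<partial>lborel)"
  proof (rule nn_integral_cong_AE)
    show "AE x in lborel. ennreal ((cmod (f x - g x))^2) = liminf (\<lambda>m. ennreal ((cmod (phi m x - g x))^2))"
      using lim
    proof eventually_elim
      case (elim x)
      then have "(\<lambda>m. ennreal ((cmod (phi m x - g x))^2)) \<longlonglongrightarrow> ennreal ((cmod (f x - g x))^2)"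
        by (intro tendsto_ennrealI tendsto_intros)
      then show ?case by (intro lim_imp_Liminf[symmetric]) auto
    qed
  qed
  also have "\<dots> \<le> liminf (\<lambda>m. \<integral>\<^sup>+x. ennreal ((cmod (phi m x - g x))^2) \<partial>lborel)"
    by (rule nn_integral_liminf) measurable
  also have "\<dots> \<le> ennreal (c^2)"
  proof (rule Liminf_le)
    show "\<forall>\<^sub>F m in sequentially. (\<integral>\<^sup>+x. ennreal ((cmod (phi m x - g x))^2) \<partial>lborel) \<le> ennreal (c^2)"
      using bound
    proof eventually_elim
      case (elim m)
      then have "(l2_norm (\<lambda>x. phi m x - g x))^2 \<le> c^2" by (intro power_mono) auto
      then show ?case
        using nn_integral_l2_norm_sq[OF L2_diff[OF L2]] by (simp add: ennreal_leI)
    qed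
  qed simp
  finally have bnd: "(\<integral>\<^sup>+x. ennreal ((cmod (f x - g x))^2) \<partial>lborel) \<le> ennreal (c^2)" .
  then have "integrable lborel (\<lambda>x. (cmod (f x - g x))^2)"
    by (intro integrableI_nonneg) (auto simp: top_unique less_top[symmetric] intro: le_less_trans)
  then show fg: "(\<lambda>x. f x - g x) \<in> L2"
    by (intro L2I) auto
  have "(l2_norm (\<lambda>x. f x - g x))^2 = enn2real (\<integral>\<^sup>+x. ennreal ((cmod (f x - g x))^2) \<partial>lborel)"
    unfolding l2_norm_sq using fg by (intro integral_eq_nn_integral) (auto dest: L2D)
  also have "\<dots> \<le> c^2"
    by (rule enn2real_leI[OF _ bnd]) simp
  finally have "(l2_norm (\<lambda>x. f x - g x))^2 \<le> c^2" .
  moreover obtain m where "l2_norm (\<lambda>x. phi m x - g x) \<le> c"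
    using bound eventually_sequentially by auto
  then have "0 \<le> c" by (meson l2_norm_nonneg order_trans)
  ultimately show "l2_norm (\<lambda>x. f x - g x) \<le> c"
    by (rule power2_le_imp_le)
qed

theorem riesz_fischer:
  assumes L2: "\<And>n. fs n \<in> L2"
    and Cauchy: "\<And>e. e > 0 \<Longrightarrow> \<exists>N. \<forall>m\<ge>N. \<forall>n\<ge>N. l2_norm (\<lambda>x. fs m x - fs n x) < e"
  shows "\<exists>f\<in>L2. l2_conv fs f"
proof -
  obtain r where r: "strict_mono r" and fast: "\<And>k m. r k \<le> m \<Longrightarrow> l2_norm (\<lambda>x. fs m x - fs (r k) x) < (1/4)^k"
    using l2_Cauchy_fast_subseq[OF Cauchy] by blast
  define phi where "phi k = fs (r k)" for k
  have phi_L2: "phi k \<in> L2" for k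
    by (simp add: phi_def L2)
  have [measurable]: "phi k \<in> borel_measurable borel" for k
    using phi_L2 L2_borel_measurable by blast
  have phi_fast: "l2_norm (\<lambda>x. phi m x - phi k x) < (1/4)^k" if "k \<le> m" for k m
    unfolding phi_def using fast[of k "r m"] that strict_mono_less_eq[OF r] by simp
  have "AE x in lborel. convergent (\<lambda>k. phi k x)"
    using phi_fast[of k "Suc k" for k] by (intro AE_convergent_if_l2_fast[OF phi_L2] less_imp_le) simp
  then have lim: "AE x in lborel. (\<lambda>k. phi k x) \<longlonglongrightarrow> lim (\<lambda>k. phi k x)"
    by eventually_elim (simp add: convergent_LIMSEQ_iff)
  define f where "f x = lim (\<lambda>k. phi k x)" for x
  have f_meas: "f \<in> borel_measurable borel"
    unfolding f_def by measurable
  have tail: "(\<lambda>x. f x - phi k x) \<in> L2 \<and> l2_norm (\<lambda>x. f x - phi k x) \<le> (1/4)^k" for k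
  proof -
    have "\<forall>\<^sub>F m in sequentially. l2_norm (\<lambda>x. phi m x - phi k x) \<le> (1/4)^k"
      unfolding eventually_sequentially using phi_fast less_imp_le by blast
    then show ?thesis
      using l2_norm_limit_le[OF phi_L2 phi_L2 lim[folded f_def] f_meas] by blast
  qed
  have f_L2: "f \<in> L2"
    using L2_add[OF conjunct1[OF tail[of 0]] phi_L2[of 0]] by simp
  have "l2_conv fs f"
    unfolding l2_conv_def
  proof (rule LIMSEQ_I)
    fix e :: real
    assume "e > 0"
    then obtain k where k: "(1/4::real)^k < e / 2"
      using real_arch_pow_inv[of "e/2" "1/4"] by auto
    have "l2_norm (\<lambda>x. fs n x - f x) < e" if "r k \<le> n" for n
    proof -
      have "l2_norm (\<lambda>x. fs n x - f x) \<le> l2_norm (\<lambda>x. fs n x - phi k x) + l2_norm (\<lambda>x. phi k x - f x)"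
        by (rule l2_norm_diff_triangle[OF L2 phi_L2 f_L2])
      also have "\<dots> < (1/4)^k + (1/4)^k"
        using fast[OF that] tail[of k] l2_norm_diff_commute[of "phi k" f] unfolding phi_def by linarith
      finally show ?thesis using k by simp
    qed
    then show "\<exists>N. \<forall>n\<ge>N. norm (l2_norm (\<lambda>x. fs n x - f x) - 0) < e"
      by auto
  qed
  with f_L2 show ?thesis by blast
qed

lemma closed_l2_subspaceD:
  assumes "closed_l2_subspace V"
  shows closed_l2_subspace_L2: "f \<in> V \<Longrightarrow> f \<in> L2"
    and closed_l2_subspace_zero: "(\<lambda>x. 0) \<in> V"
    and closed_l2_subspace_add: "f \<in> V \<Longrightarrow> g \<in> V \<Longrightarrow> (\<lambda>x. f x + g x) \<in> V"
    and closed_l2_subspace_scale: "f \<in> V \<Longrightarrow> (\<lambda>x. c * f x) \<in> V"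
    and closed_l2_subspace_aeq: "f \<in> V \<Longrightarrow> g \<in> L2 \<Longrightarrow> aeq f g \<Longrightarrow> g \<in> V"
    and closed_l2_subspace_limit: "(\<And>n. fs n \<in> V) \<Longrightarrow> f \<in> L2 \<Longrightarrow> l2_conv fs f \<Longrightarrow> f \<in> V"
  using assms unfolding closed_l2_subspace_def l2_subspace_def by blast+

lemma closed_l2_subspace_diff:
  "closed_l2_subspace V \<Longrightarrow> f \<in> V \<Longrightarrow> g \<in> V \<Longrightarrow> (\<lambda>x. f x - g x) \<in> V"
  using closed_l2_subspace_add[OF _ _ closed_l2_subspace_scale, of V f g "-1"] by simp

lemma l2_minimizing_seq_convergent:
  assumes V: "closed_l2_subspace V" and g: "g \<in> L2"
    and d_le: "\<And>w. w \<in> V \<Longrightarrow> d \<le> l2_norm (\<lambda>x. g x - w x)" and d: "0 \<le> d"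
    and vs: "\<And>n. vs n \<in> V" and close: "\<And>n. l2_norm (\<lambda>x. g x - vs n x) \<le> d + e n"
    and e: "e \<longlonglongrightarrow> 0"
  obtains v where "v \<in> L2" "l2_conv vs v"
proof -
  have vs_L2: "vs n \<in> L2" for n
    using closed_l2_subspace_L2[OF V vs] .
  define u where "u n = 2 * (d + e n)^2 - 2 * d^2" for n
  have "(\<lambda>n. 2 * (d + e n)^2 - 2 * d^2) \<longlonglongrightarrow> 2 * (d + 0)^2 - 2 * d^2"
    using e by (intro tendsto_intros)
  then have u_lim: "u \<longlonglongrightarrow> 0"
    by (simp add: u_def[abs_def])
  have parallelogram: "(l2_norm (\<lambda>x. vs m x - vs n x))^2 \<le> u m + u n" for m n
  proof -
    define a where "a x = g x - vs m x" for x
    define b where "b x = g x - vs n x" for x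
    have ab_L2: "a \<in> L2" "b \<in> L2"
      unfolding a_def[abs_def] b_def[abs_def] using L2_diff g vs_L2 by auto
    have mid: "(\<lambda>x. (1/2) * (vs m x + vs n x)) \<in> V"
      by (intro closed_l2_subspace_scale[OF V] closed_l2_subspace_add[OF V] vs)
    have "2 * d \<le> 2 * l2_norm (\<lambda>x. g x - (1/2) * (vs m x + vs n x))"
      using d_le[OF mid] by simp
    also have "\<dots> = l2_norm (\<lambda>x. a x + b x)"
      using l2_norm_scale[of 2 "\<lambda>x. g x - (1/2) * (vs m x + vs n x)"]
      by (simp add: a_def b_def algebra_simps)
    finally have "(2 * d)^2 \<le> (l2_norm (\<lambda>x. a x + b x))^2"
      using d by (intro power_mono) auto
    moreover have "(2 * d)^2 = 4 * d^2"
      by simp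
    moreover have "(l2_norm a)^2 \<le> (d + e m)^2" "(l2_norm b)^2 \<le> (d + e n)^2"
      using close[of m] close[of n] by (auto intro!: power_mono simp: a_def[abs_def] b_def[abs_def])
    moreover have "(l2_norm (\<lambda>x. vs m x - vs n x))^2 + (l2_norm (\<lambda>x. a x + b x))^2
        = 2 * (l2_norm a)^2 + 2 * (l2_norm b)^2"
      using l2_norm_add_sq[OF ab_L2] l2_norm_diff_sq[OF ab_L2] l2_norm_diff_commute[of "vs m" "vs n"]
      by (simp add: a_def b_def)
    ultimately show ?thesis
      unfolding u_def by linarith
  qed
  have "\<exists>v\<in>L2. l2_conv vs v"
  proof (rule riesz_fischer[OF vs_L2])
    fix \<epsilon> :: real
    assume "\<epsilon> > 0"
    then have "\<epsilon>^2 / 2 > 0"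
      by simp
    then obtain N where N': "\<And>n. n \<ge> N \<Longrightarrow> norm (u n - 0) < \<epsilon>^2 / 2"
      using LIMSEQ_D[OF u_lim] by blast
    have N: "u n < \<epsilon>^2 / 2" if "n \<ge> N" for n
      using N'[OF that] abs_ge_self[of "u n"] unfolding real_norm_def diff_zero by linarith
    have "l2_norm (\<lambda>x. vs m x - vs n x) < \<epsilon>" if "m \<ge> N" "n \<ge> N" for m n
    proof (rule power_less_imp_less_base)
      show "(l2_norm (\<lambda>x. vs m x - vs n x))^2 < \<epsilon>^2"
        using parallelogram[of m n] N[OF that(1)] N[OF that(2)] by linarith
    qed (use \<open>\<epsilon> > 0\<close> in simp)
    then show "\<exists>N. \<forall>m\<ge>N. \<forall>n\<ge>N. l2_norm (\<lambda>x. vs m x - vs n x) < \<epsilon>"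
      by blast
  qed
  then show thesis
    using that by blast
qed

lemma l2_minimizer_exists:
  assumes V: "closed_l2_subspace V" and g: "g \<in> L2"
  obtains v where "v \<in> V" "\<And>w. w \<in> V \<Longrightarrow> l2_norm (\<lambda>x. g x - v x) \<le> l2_norm (\<lambda>x. g x - w x)"
proof -
  define d where "d = (INF w\<in>V. l2_norm (\<lambda>x. g x - w x))"
  have V_ne: "V \<noteq> {}" and bdd: "bdd_below ((\<lambda>w. l2_norm (\<lambda>x. g x - w x)) ` V)"
    using closed_l2_subspace_zero[OF V] by (auto intro: bdd_belowI[of _ 0])
  have d_le: "d \<le> l2_norm (\<lambda>x. g x - w x)" if "w \<in> V" for w
    unfolding d_def using bdd that by (rule cINF_lower)
  have d_nonneg: "0 \<le> d"
    unfolding d_def using V_ne by (rule cINF_greatest) simp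
  define e :: "nat \<Rightarrow> real" where "e n = 1 / Suc n" for n
  have e_lim: "e \<longlonglongrightarrow> 0"
    unfolding e_def using LIMSEQ_inverse_real_of_nat by (simp add: inverse_eq_divide)
  have "\<exists>w\<in>V. l2_norm (\<lambda>x. g x - w x) < d + e n" for n
  proof -
    have "d < d + e n"
      by (simp add: e_def)
    then have "(INF w\<in>V. l2_norm (\<lambda>x. g x - w x)) < d + e n"
      by (simp only: d_def)
    then show ?thesis
      by (simp only: cINF_less_iff[OF V_ne bdd])
  qed
  then obtain vs where vs_V: "\<And>n. vs n \<in> V" and vs_close: "\<And>n. l2_norm (\<lambda>x. g x - vs n x) < d + e n"
    by metis
  obtain v where v_L2: "v \<in> L2" and lim: "l2_conv vs v"
    using l2_minimizing_seq_convergent[OF V g d_le d_nonneg vs_V less_imp_le[OF vs_close] e_lim] .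
  have v_V: "v \<in> V"
    using closed_l2_subspace_limit[OF V vs_V v_L2 lim] .
  have "l2_norm (\<lambda>x. g x - v x) \<le> d + 0 + 0"
  proof (rule LIMSEQ_le_const)
    show "(\<lambda>n. d + e n + l2_norm (\<lambda>x. vs n x - v x)) \<longlonglongrightarrow> d + 0 + 0"
      using lim e_lim unfolding l2_conv_def by (intro tendsto_add tendsto_const)
    have "l2_norm (\<lambda>x. g x - v x) \<le> d + e n + l2_norm (\<lambda>x. vs n x - v x)" for n
      using l2_norm_diff_triangle[OF g closed_l2_subspace_L2[OF V vs_V[of n]] v_L2] vs_close[of n]
      by linarith
    then show "\<exists>N. \<forall>n\<ge>N. l2_norm (\<lambda>x. g x - v x) \<le> d + e n + l2_norm (\<lambda>x. vs n x - v x)"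
      by blast
  qed
  then have "l2_norm (\<lambda>x. g x - v x) \<le> l2_norm (\<lambda>x. g x - w x)" if "w \<in> V" for w
    using d_le[OF that] by simp
  then show thesis
    by (rule that[OF v_V])
qed

lemma l2_orth_if_variational:
  assumes V: "closed_l2_subspace V" and r_L2: "r \<in> L2"
    and variational: "\<And>z. z \<in> V \<Longrightarrow> 2 * Re (l2_inner r z) \<le> (l2_norm z)^2"
  shows "r \<in> l2_orth V"
proof -
  have "l2_inner w r = 0" if w: "w \<in> V" for w
  proof -
    define a where "a = l2_inner r w"
    define X where "X = (cmod a)^2"
    define W where "W = (l2_norm w)^2"
    define t :: real where "t = 1 / (W + 1)"
    have W: "W \<ge> 0"
      by (simp add: W_def)
    have t: "t > 0" "t * W < 1"
      using W by (simp_all add: t_def divide_simps)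
    define z where "z x = (complex_of_real t * a) * w x" for x
    have z: "z \<in> V"
      unfolding z_def[abs_def] by (rule closed_l2_subspace_scale[OF V w])
    have "l2_inner r z = cnj (complex_of_real t * a) * a"
      by (simp add: z_def[abs_def] l2_inner_scale_right a_def)
    also have "\<dots> = complex_of_real t * (a * cnj a)"
      by (simp add: mult_ac)
    also have "a * cnj a = complex_of_real X"
      unfolding X_def by (rule complex_norm_square[symmetric])
    finally have "Re (l2_inner r z) = t * X"
      by simp
    moreover have "(l2_norm z)^2 = t^2 * X * W"
      using t(1) by (simp add: z_def[abs_def] l2_norm_scale norm_mult power_mult_distrib X_def W_def)
    ultimately have "2 * (t * X) \<le> t^2 * X * W"
      using variational[OF z] by simp
    then have "t * (2 * X) \<le> t * (t * X * W)"
      by (simp add: power2_eq_square mult_ac)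
    then have "2 * X \<le> t * X * W"
      using t(1) by (rule mult_left_le_imp_le)
    moreover have "t * X * W \<le> X"
      using mult_left_mono[OF less_imp_le[OF t(2)], of X] by (simp add: X_def mult_ac)
    moreover have "X \<ge> 0"
      by (simp add: X_def)
    ultimately have "X = 0"
      by linarith
    show ?thesis
      by (rule l2_inner_eq_0_swap) (use \<open>X = 0\<close> in \<open>simp add: a_def X_def\<close>)
  qed
  with r_L2 show ?thesis
    by (simp add: l2_orth_def)
qed

lemma l2_orth_if_minimizer:
  assumes V: "closed_l2_subspace V" and g: "g \<in> L2" and v: "v \<in> V"
    and min: "\<And>w. w \<in> V \<Longrightarrow> l2_norm (\<lambda>x. g x - v x) \<le> l2_norm (\<lambda>x. g x - w x)"
  shows "(\<lambda>x. g x - v x) \<in> l2_orth V"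
proof (rule l2_orth_if_variational[OF V L2_diff[OF g closed_l2_subspace_L2[OF V v]]])
  fix z
  assume z: "z \<in> V"
  have "(\<lambda>x. g x - (v x + z x)) = (\<lambda>x. (g x - v x) - z x)"
    by (simp add: algebra_simps)
  then have "l2_norm (\<lambda>x. g x - v x) \<le> l2_norm (\<lambda>x. (g x - v x) - z x)"
    using min[OF closed_l2_subspace_add[OF V v z]] by simp
  then have "(l2_norm (\<lambda>x. g x - v x))^2 \<le> (l2_norm (\<lambda>x. (g x - v x) - z x))^2"
    by (intro power_mono) auto
  then show "2 * Re (l2_inner (\<lambda>x. g x - v x) z) \<le> (l2_norm z)^2"
    using l2_norm_diff_sq[OF L2_diff[OF g closed_l2_subspace_L2[OF V v]] closed_l2_subspace_L2[OF V z]]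
    by simp
qed

theorem l2_projection:
  assumes "closed_l2_subspace V" "g \<in> L2"
  obtains v where "v \<in> V" "(\<lambda>x. g x - v x) \<in> l2_orth V"
  using l2_minimizer_exists[OF assms] l2_orth_if_minimizer[OF assms] by metis

lemma l2_orth_L2: "f \<in> l2_orth A \<Longrightarrow> f \<in> L2"
  by (simp add: l2_orth_def)

lemma l2_orth_antimono: "A \<subseteq> B \<Longrightarrow> l2_orth B \<subseteq> l2_orth A"
  unfolding l2_orth_def by blast

lemma closed_l2_subspace_l2_orth:
  assumes "A \<subseteq> L2"
  shows "closed_l2_subspace (l2_orth A)"
  unfolding closed_l2_subspace_def l2_subspace_def
proof (intro conjI ballI allI impI)
  show "l2_orth A \<subseteq> L2"
    by (auto simp: l2_orth_def)
  show "(\<lambda>x. 0) \<in> l2_orth A"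
    by (simp add: l2_orth_def l2_inner_def L2_zero)
  fix f g
  assume "f \<in> l2_orth A" "g \<in> l2_orth A"
  with assms show "(\<lambda>x. f x + g x) \<in> l2_orth A"
    by (auto simp: l2_orth_def l2_inner_add_right intro: L2_add)
next
  fix c f
  assume "f \<in> l2_orth A"
  then show "(\<lambda>x. c * f x) \<in> l2_orth A"
    by (auto simp: l2_orth_def l2_inner_scale_right intro: L2_scale)
next
  fix f g
  assume "f \<in> l2_orth A" "g \<in> L2" "aeq f g"
  with assms show "g \<in> l2_orth A"
    by (auto simp: l2_orth_def dest: l2_inner_cong_aeq_right)
next
  fix fs f
  assume lim: "(\<forall>n. fs n \<in> l2_orth A) \<and> f \<in> L2 \<and> l2_conv fs f"
  have orth: "l2_inner f a = 0" if "a \<in> A" for a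
  proof -
    have "(\<lambda>n. l2_inner (fs n) a) \<longlonglongrightarrow> l2_inner f a"
      using lim that assms by (intro l2_inner_tendsto_left) (auto simp: l2_orth_def)
    moreover have "l2_inner (fs n) a = 0" for n
      by (rule l2_inner_eq_0_swap) (use lim that in \<open>simp add: l2_orth_def\<close>)
    ultimately show ?thesis
      by (simp add: LIMSEQ_const_iff)
  qed
  have "l2_inner a f = 0" if "a \<in> A" for a
    by (rule l2_inner_eq_0_swap[OF orth[OF that]])
  with lim show "f \<in> l2_orth A"
    by (simp add: l2_orth_def)
qed

lemma l2_orth_self_aeq_0: "f \<in> A \<Longrightarrow> f \<in> l2_orth A \<Longrightarrow> aeq f (\<lambda>x. 0)"
  by (auto simp: l2_orth_def intro: l2_inner_self_eq_0D)

lemma aeq_0_if_aeq_l2_orth: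
  assumes V: "closed_l2_subspace V" and x: "x \<in> V" and y: "y \<in> l2_orth V" and xy: "aeq x y"
  shows "aeq x (\<lambda>x. 0)"
proof -
  have "x \<in> l2_orth V"
    using closed_l2_subspace_aeq[OF closed_l2_subspace_l2_orth y _ aeq_sym[OF xy]]
      closed_l2_subspace_L2[OF V] x by blast
  with x show ?thesis
    by (rule l2_orth_self_aeq_0)
qed

lemma l2_orth_l2_orth:
  assumes V: "closed_l2_subspace V"
  shows "l2_orth (l2_orth V) = V"
proof
  show "V \<subseteq> l2_orth (l2_orth V)"
  proof
    fix g
    assume g: "g \<in> V"
    have "l2_inner f g = 0" if "f \<in> l2_orth V" for f
      by (rule l2_inner_eq_0_swap) (use that g in \<open>simp add: l2_orth_def\<close>)
    with g show "g \<in> l2_orth (l2_orth V)"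
      by (simp add: l2_orth_def closed_l2_subspace_L2[OF V])
  qed
  show "l2_orth (l2_orth V) \<subseteq> V"
  proof
    fix y
    assume y: "y \<in> l2_orth (l2_orth V)"
    then have y_L2: "y \<in> L2"
      by (rule l2_orth_L2)
    obtain v where v: "v \<in> V" and r: "(\<lambda>x. y x - v x) \<in> l2_orth V"
      using l2_projection[OF V y_L2] .
    have "(\<lambda>x. y x - v x) \<in> l2_orth (l2_orth V)"
      using closed_l2_subspace_diff[OF closed_l2_subspace_l2_orth y] v
        \<open>V \<subseteq> l2_orth (l2_orth V)\<close> by (auto simp: l2_orth_def)
    then have "aeq v y"
      using l2_orth_self_aeq_0[OF r] by (simp add: aeq_diff_eq_0_iff aeq_sym)
    then show "y \<in> V"
      using closed_l2_subspace_aeq[OF V v y_L2] by blast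
  qed
qed

lemma L2_subset_if_l2_orth_trivial:
  assumes V: "closed_l2_subspace V" and trivial: "\<And>f. f \<in> l2_orth V \<Longrightarrow> aeq f (\<lambda>x. 0)"
  shows "L2 \<subseteq> V"
proof
  fix g
  assume g: "g \<in> L2"
  obtain v where v: "v \<in> V" and r: "(\<lambda>x. g x - v x) \<in> l2_orth V"
    using l2_projection[OF V g] .
  from r have "aeq (\<lambda>x. g x - v x) (\<lambda>x. 0)"
    by (rule trivial)
  then have "aeq v g"
    by (simp add: aeq_diff_eq_0_iff aeq_sym)
  then show "g \<in> V"
    using closed_l2_subspace_aeq[OF V v g] by blast
qed

section \<open>Closed linear spans\<close>

definition l2_closure :: "cfun set \<Rightarrow> cfun set" where
  "l2_closure U = {f \<in> L2. \<forall>\<epsilon>>0. \<exists>u\<in>U. l2_norm (\<lambda>x. f x - u x) < \<epsilon>}"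

definition l2_span :: "('k \<Rightarrow> cfun) \<Rightarrow> cfun set" where
  "l2_span e = {f. \<exists>F c. finite F \<and> f = (\<lambda>x. \<Sum>k\<in>F. c k * e k x)}"

lemma mem_l2_closure_l2_span:
  "g \<in> l2_closure (l2_span e) \<longleftrightarrow>
    g \<in> L2 \<and> (\<forall>\<epsilon>>0. \<exists>F c. finite F \<and> l2_norm (\<lambda>x. g x - (\<Sum>k\<in>F. c k * e k x)) < \<epsilon>)"
proof -
  have "(\<exists>u\<in>l2_span e. P u) \<longleftrightarrow> (\<exists>F c. finite F \<and> P (\<lambda>x. \<Sum>k\<in>F. c k * e k x))" for P
    unfolding l2_span_def by auto
  then show ?thesis
    by (simp only: l2_closure_def mem_Collect_eq)
qed

lemma onb_family_subset_l2_closure: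
  assumes "onb_family M UNIV e" "M \<subseteq> L2"
  shows "M \<subseteq> l2_closure (l2_span e)"
proof
  fix g
  assume "g \<in> M"
  with assms show "g \<in> l2_closure (l2_span e)"
    unfolding onb_family_def mem_l2_closure_l2_span by blast
qed

lemma onb_familyI:
  assumes "\<And>k. e k \<in> M" "\<And>k l. l2_inner (e k) (e l) = (if k = l then 1 else 0)"
    and dense: "M \<subseteq> l2_closure (l2_span e)"
  shows "onb_family M UNIV e"
  unfolding onb_family_def
proof (intro conjI ballI allI impI)
  fix g and \<epsilon> :: real
  assume "g \<in> M" "\<epsilon> > 0"
  then obtain F c where "finite F" "l2_norm (\<lambda>x. g x - (\<Sum>k\<in>F. c k * e k x)) < \<epsilon>"
    using dense unfolding subset_iff mem_l2_closure_l2_span by blast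
  then show "\<exists>F c. finite F \<and> F \<subseteq> UNIV \<and> l2_norm (\<lambda>x. g x - (\<Sum>k\<in>F. c k * e k x)) < \<epsilon>"
    by blast
qed (use assms in auto)

lemma l2_closure_approx:
  assumes U: "U \<subseteq> L2" and f: "f \<in> L2"
    and approx: "\<And>\<epsilon>. \<epsilon> > 0 \<Longrightarrow> \<exists>h\<in>l2_closure U. l2_norm (\<lambda>x. f x - h x) < \<epsilon>"
  shows "f \<in> l2_closure U"
proof -
  have "\<exists>u\<in>U. l2_norm (\<lambda>x. f x - u x) < \<epsilon>" if "\<epsilon> > 0" for \<epsilon>
  proof -
    have "\<epsilon> / 2 > 0"
      using that by simp
    then obtain h where h: "h \<in> l2_closure U" "l2_norm (\<lambda>x. f x - h x) < \<epsilon> / 2"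
      using approx by blast
    then obtain u where u: "u \<in> U" "l2_norm (\<lambda>x. h x - u x) < \<epsilon> / 2"
      using \<open>\<epsilon> / 2 > 0\<close> unfolding l2_closure_def by blast
    have "l2_norm (\<lambda>x. f x - u x) \<le> l2_norm (\<lambda>x. f x - h x) + l2_norm (\<lambda>x. h x - u x)"
      using f h(1) u(1) U by (intro l2_norm_diff_triangle) (auto simp: l2_closure_def)
    with h(2) u show ?thesis
      by (intro bexI[OF _ u(1)]) linarith
  qed
  with f show ?thesis
    by (simp add: l2_closure_def)
qed

lemma subset_l2_closure: "U \<subseteq> L2 \<Longrightarrow> U \<subseteq> l2_closure U"
proof
  fix f
  assume "U \<subseteq> L2" "f \<in> U"
  moreover have "l2_norm (\<lambda>x. f x - f x) = 0"
    by (simp add: l2_norm_def)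
  ultimately show "f \<in> l2_closure U"
    unfolding l2_closure_def by force
qed

lemma l2_closure_add:
  assumes U: "U \<subseteq> L2" and add: "\<And>u v. u \<in> U \<Longrightarrow> v \<in> U \<Longrightarrow> (\<lambda>x. u x + v x) \<in> U"
    and f: "f \<in> l2_closure U" and g: "g \<in> l2_closure U"
  shows "(\<lambda>x. f x + g x) \<in> l2_closure U"
  unfolding l2_closure_def
proof (intro CollectI conjI allI impI)
  have f_L2: "f \<in> L2" and g_L2: "g \<in> L2"
    using f g by (simp_all add: l2_closure_def)
  then show "(\<lambda>x. f x + g x) \<in> L2"
    by (rule L2_add)
  fix \<epsilon> :: real
  assume "\<epsilon> > 0"
  then have "\<epsilon> / 2 > 0"
    by simp
  then obtain u v where u: "u \<in> U" "l2_norm (\<lambda>x. f x - u x) < \<epsilon> / 2"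
    and v: "v \<in> U" "l2_norm (\<lambda>x. g x - v x) < \<epsilon> / 2"
    using f g unfolding l2_closure_def by blast
  have "l2_norm (\<lambda>x. (f x - u x) + (g x - v x)) \<le> l2_norm (\<lambda>x. f x - u x) + l2_norm (\<lambda>x. g x - v x)"
    using u(1) v(1) U by (intro l2_norm_triangle L2_diff f_L2 g_L2) auto
  with u v show "\<exists>w\<in>U. l2_norm (\<lambda>x. f x + g x - w x) < \<epsilon>"
    by (intro bexI[OF _ add[OF u(1) v(1)]]) (simp add: algebra_simps)
qed

lemma l2_closure_scale:
  assumes scale: "\<And>c u. u \<in> U \<Longrightarrow> (\<lambda>x. c * u x) \<in> U" and f: "f \<in> l2_closure U"
  shows "(\<lambda>x. c * f x) \<in> l2_closure U"
  unfolding l2_closure_def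
proof (intro CollectI conjI allI impI)
  show "(\<lambda>x. c * f x) \<in> L2"
    using f by (auto simp: l2_closure_def intro: L2_scale)
  fix \<epsilon> :: real
  assume "\<epsilon> > 0"
  have pos: "cmod c + 1 > 0"
    using norm_ge_zero[of c] by linarith
  with \<open>\<epsilon> > 0\<close> have "\<epsilon> / (cmod c + 1) > 0"
    by simp
  then obtain u where u: "u \<in> U" "l2_norm (\<lambda>x. f x - u x) < \<epsilon> / (cmod c + 1)"
    using f unfolding l2_closure_def by blast
  have "cmod c * l2_norm (\<lambda>x. f x - u x) \<le> (cmod c + 1) * l2_norm (\<lambda>x. f x - u x)"
    by (intro mult_right_mono) auto
  also have "\<dots> < \<epsilon>"
    using u(2) pos_less_divide_eq[OF pos] by (simp add: mult.commute)
  finally show "\<exists>w\<in>U. l2_norm (\<lambda>x. c * f x - w x) < \<epsilon>"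
    using l2_norm_scale[of c "\<lambda>x. f x - u x"]
    by (intro bexI[OF _ scale[of u c, OF u(1)]]) (simp add: right_diff_distrib)
qed

lemma closed_l2_subspace_l2_closure:
  assumes U: "U \<subseteq> L2" "(\<lambda>x. 0) \<in> U"
    and add: "\<And>u v. u \<in> U \<Longrightarrow> v \<in> U \<Longrightarrow> (\<lambda>x. u x + v x) \<in> U"
    and scale: "\<And>c u. u \<in> U \<Longrightarrow> (\<lambda>x. c * u x) \<in> U"
  shows "closed_l2_subspace (l2_closure U)"
  unfolding closed_l2_subspace_def l2_subspace_def
proof (intro conjI ballI allI impI)
  show "l2_closure U \<subseteq> L2"
    by (auto simp: l2_closure_def)
  show "(\<lambda>x. 0) \<in> l2_closure U"
    using U(2) by (auto simp: l2_closure_def L2_zero l2_norm_def intro!: bexI[of _ "\<lambda>x. 0"])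
  show "(\<lambda>x. f x + g x) \<in> l2_closure U" if "f \<in> l2_closure U" "g \<in> l2_closure U" for f g
    using U(1) add that by (rule l2_closure_add)
  show "(\<lambda>x. c * f x) \<in> l2_closure U" if "f \<in> l2_closure U" for c f
    using scale that by (rule l2_closure_scale)
next
  fix f g
  assume f: "f \<in> l2_closure U" and g: "g \<in> L2" and fg: "aeq f g"
  have "aeq (\<lambda>x. g x - f x) (\<lambda>x. 0)"
    using aeq_sym[OF fg] by (simp add: aeq_diff_eq_0_iff)
  moreover have "f \<in> L2"
    using f by (simp add: l2_closure_def)
  ultimately have "l2_norm (\<lambda>x. g x - f x) = 0"
    using l2_norm_eq_0_iff[OF L2_diff[OF g]] by blast
  show "g \<in> l2_closure U"
  proof (rule l2_closure_approx[OF U(1) g])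
    fix \<epsilon> :: real
    assume "\<epsilon> > 0"
    with \<open>l2_norm (\<lambda>x. g x - f x) = 0\<close> show "\<exists>h\<in>l2_closure U. l2_norm (\<lambda>x. g x - h x) < \<epsilon>"
      by (intro bexI[OF _ f]) simp
  qed
next
  fix fs f
  assume lim: "(\<forall>n. fs n \<in> l2_closure U) \<and> f \<in> L2 \<and> l2_conv fs f"
  show "f \<in> l2_closure U"
  proof (rule l2_closure_approx[OF U(1)])
    fix \<epsilon> :: real
    assume "\<epsilon> > 0"
    then obtain N where "\<forall>n\<ge>N. norm (l2_norm (\<lambda>x. fs n x - f x) - 0) < \<epsilon>"
      using LIMSEQ_D[of "\<lambda>n. l2_norm (\<lambda>x. fs n x - f x)" 0] lim unfolding l2_conv_def by blast
    then have "l2_norm (\<lambda>x. f x - fs N x) < \<epsilon>"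
      using l2_norm_diff_commute[of f "fs N"] by simp
    then show "\<exists>h\<in>l2_closure U. l2_norm (\<lambda>x. f x - h x) < \<epsilon>"
      using lim by blast
  qed (use lim in blast)
qed

lemma l2_closure_limit:
  assumes "f \<in> l2_closure U"
  obtains us where "\<And>n. us n \<in> U" "l2_conv us f"
proof -
  have "\<exists>u\<in>U. l2_norm (\<lambda>x. f x - u x) < 1 / Suc n" for n
    using assms by (simp add: l2_closure_def)
  then obtain us where us: "\<And>n. us n \<in> U" "\<And>n. l2_norm (\<lambda>x. f x - us n x) < 1 / Suc n"
    by metis
  have bound: "norm (l2_norm (\<lambda>x. us n x - f x)) \<le> 1 / real (Suc n)" for n
    using us(2)[of n] l2_norm_diff_commute[of f "us n"] by simp
  have "(\<lambda>n. 1 / real (Suc n)) \<longlonglongrightarrow> 0"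
    using LIMSEQ_inverse_real_of_nat by (simp add: inverse_eq_divide)
  then have "(\<lambda>n. l2_norm (\<lambda>x. us n x - f x)) \<longlonglongrightarrow> 0"
    using Lim_null_comparison[OF always_eventually, of "\<lambda>n. l2_norm (\<lambda>x. us n x - f x)"
        "\<lambda>n. 1 / real (Suc n)"] bound by blast
  then have "l2_conv us f"
    unfolding l2_conv_def .
  then show thesis
    by (rule that[OF us(1)])
qed

lemma l2_orth_subset_l2_orth_l2_closure:
  assumes U: "U \<subseteq> L2"
  shows "l2_orth U \<subseteq> l2_orth (l2_closure U)"
proof
  fix g
  assume g: "g \<in> l2_orth U"
  have "l2_inner f g = 0" if f: "f \<in> l2_closure U" for f
  proof -
    obtain us where us: "\<And>n. us n \<in> U" "l2_conv us f"
      using l2_closure_limit[OF f] by blast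
    have "(\<lambda>n. l2_inner (us n) g) \<longlonglongrightarrow> l2_inner f g"
      using us U f g by (intro l2_inner_tendsto_left) (auto simp: l2_closure_def l2_orth_def)
    moreover have "l2_inner (us n) g = 0" for n
      using g us(1) by (simp add: l2_orth_def)
    ultimately show ?thesis
      by (simp add: LIMSEQ_const_iff)
  qed
  with g show "g \<in> l2_orth (l2_closure U)"
    by (simp add: l2_orth_def)
qed

lemma l2_span_L2:
  assumes "\<And>k. e k \<in> L2"
  shows "l2_span e \<subseteq> L2"
proof
  fix f
  assume "f \<in> l2_span e"
  then obtain F c where "f = (\<lambda>x. \<Sum>k\<in>F. c k * e k x)"
    unfolding l2_span_def by blast
  then show "f \<in> L2"
    using L2_sum[of F e c] assms by simp
qed

lemma range_subset_l2_span: "range e \<subseteq> l2_span e"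
proof
  fix f
  assume "f \<in> range e"
  then obtain k where "f = e k" by blast
  then have "f = (\<lambda>x. \<Sum>j\<in>{k}. 1 * e j x)"
    by simp
  then show "f \<in> l2_span e"
    unfolding l2_span_def by (intro CollectI exI[of _ "{k}"] exI[of _ "\<lambda>_. 1"]) simp
qed

lemma closed_l2_subspace_l2_closure_l2_span:
  assumes e: "\<And>k. e k \<in> L2"
  shows "closed_l2_subspace (l2_closure (l2_span e))"
proof (rule closed_l2_subspace_l2_closure[OF l2_span_L2[OF e]])
  show "(\<lambda>x. 0) \<in> l2_span e"
    unfolding l2_span_def by (rule CollectI, rule exI[of _ "{}"]) simp
  fix u v
  assume "u \<in> l2_span e" "v \<in> l2_span e"
  then obtain F c G d where F: "finite F" "u = (\<lambda>x. \<Sum>k\<in>F. c k * e k x)"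
    and G: "finite G" "v = (\<lambda>x. \<Sum>k\<in>G. d k * e k x)"
    unfolding l2_span_def by blast
  let ?c = "\<lambda>k. (if k \<in> F then c k else 0) + (if k \<in> G then d k else 0)"
  have "(\<lambda>x. u x + v x) = (\<lambda>x. \<Sum>k\<in>F \<union> G. ?c k * e k x)"
    unfolding F G distrib_right sum.distrib
    by (intro ext arg_cong2[where f = "(+)"] sum.mono_neutral_cong_right[symmetric])
      (use F G in auto)
  with F G show "(\<lambda>x. u x + v x) \<in> l2_span e"
    unfolding l2_span_def by (intro CollectI exI[of _ "F \<union> G"] exI[of _ ?c]) simp
next
  fix a u
  assume "u \<in> l2_span e"
  then obtain F c where "finite F" "u = (\<lambda>x. \<Sum>k\<in>F. c k * e k x)"
    unfolding l2_span_def by blast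
  then show "(\<lambda>x. a * u x) \<in> l2_span e"
    unfolding l2_span_def
    by (intro CollectI exI[of _ F] exI[of _ "\<lambda>k. a * c k"]) (simp add: sum_distrib_left mult.assoc)
qed

lemma l2_orth_range_subset_l2_orth_l2_span:
  assumes e: "\<And>k. e k \<in> L2"
  shows "l2_orth (range e) \<subseteq> l2_orth (l2_span e)"
proof
  fix g
  assume g: "g \<in> l2_orth (range e)"
  have "l2_inner u g = 0" if u: "u \<in> l2_span e" for u
  proof -
    obtain F c where "u = (\<lambda>x. \<Sum>k\<in>F. c k * e k x)"
      using u unfolding l2_span_def by blast
    then show ?thesis
      using g e by (simp add: l2_inner_sum_left l2_orth_def)
  qed
  with g show "g \<in> l2_orth (l2_span e)"
    by (simp add: l2_orth_def)
qed

section \<open>Dilations\<close>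

lemma Dil_eq_Dpow_1: "Dil = Dpow 1"
  by (intro ext) (simp add: Dil_def Dpow_def powr_half_sqrt)

lemma Dpow_Dpow: "Dpow a (Dpow b f) = Dpow (a + b) f"
proof (rule ext)
  fix x
  have "complex_of_real (2 powr (real_of_int a / 2)) * complex_of_real (2 powr (real_of_int b / 2))
      = complex_of_real (2 powr (real_of_int (a + b) / 2))"
    by (simp add: powr_add[symmetric] add_divide_distrib flip: of_real_mult)
  moreover have "2 powr real_of_int b * (2 powr real_of_int a * x) = 2 powr real_of_int (a + b) * x"
    by (simp add: powr_add mult_ac)
  ultimately show "Dpow a (Dpow b f) x = Dpow (a + b) f x"
    unfolding Dpow_def by (metis mult.assoc)
qed

lemma Dpow_0 [simp]: "Dpow 0 f = f"
  by (simp add: Dpow_def)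

lemma Dpow_add: "Dpow j (\<lambda>x. f x + g x) = (\<lambda>x. Dpow j f x + Dpow j g x)"
  by (simp add: Dpow_def distrib_left)

lemma Dpow_diff: "Dpow j (\<lambda>x. f x - g x) = (\<lambda>x. Dpow j f x - Dpow j g x)"
  by (simp add: Dpow_def right_diff_distrib)

lemma Dpow_scale: "Dpow j (\<lambda>x. c * f x) = (\<lambda>x. c * Dpow j f x)"
  by (simp add: Dpow_def mult_ac)

lemma Dpow_L2:
  assumes "f \<in> L2"
  shows "Dpow j f \<in> L2"
proof (rule L2I)
  define c :: real where "c = 2 powr real_of_int j"
  have [measurable]: "f \<in> borel_measurable borel"
    using L2_borel_measurable[OF assms] .
  show "Dpow j f \<in> borel_measurable lborel"
    unfolding Dpow_def by measurable
  have "integrable lborel (\<lambda>x. c * (cmod (f (0 + c * x)))^2)"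
    using lborel_integrable_real_affine[OF L2D(2)[OF assms], of c 0] by (simp add: c_def)
  moreover have "(cmod (Dpow j f x))^2 = c * (cmod (f (0 + c * x)))^2" for x
  proof -
    have "(2 powr (real_of_int j / 2))^2 = c"
      by (simp add: c_def power2_eq_square flip: powr_add)
    then show ?thesis
      by (simp add: Dpow_def c_def norm_mult power_mult_distrib)
  qed
  ultimately show "integrable lborel (\<lambda>x. (cmod (Dpow j f x))^2)"
    by simp
qed

lemma l2_inner_Dpow_Dpow:
  assumes "f \<in> L2" "g \<in> L2"
  shows "l2_inner (Dpow j f) (Dpow j g) = l2_inner f g"
proof -
  define c :: real where "c = 2 powr real_of_int j"
  have c: "c > 0"
    by (simp add: c_def)
  have sq: "complex_of_real (2 powr (real_of_int j / 2)) * complex_of_real (2 powr (real_of_int j / 2))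
      = complex_of_real c"
    by (simp add: c_def powr_add[symmetric] of_real_mult[symmetric] del: of_real_mult)
  have "Dpow j f x * cnj (Dpow j g x) = complex_of_real c * (f (0 + c * x) * cnj (g (0 + c * x)))" for x
    unfolding Dpow_def c_def[symmetric] using sq by (simp add: mult_ac)
  then have "l2_inner (Dpow j f) (Dpow j g)
      = complex_of_real c * integral\<^sup>L lborel (\<lambda>x. f (0 + c * x) * cnj (g (0 + c * x)))"
    by (simp add: l2_inner_def)
  also have "\<dots> = l2_inner f g"
    using lborel_integral_real_affine[of c "\<lambda>y. f y * cnj (g y)" 0] c
    by (simp add: l2_inner_def scaleR_conv_of_real)
  finally show ?thesis .
qed

lemma l2_inner_Dpow_left:
  assumes "f \<in> L2" "g \<in> L2"
  shows "l2_inner (Dpow j f) g = l2_inner f (Dpow (- j) g)"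
  using l2_inner_Dpow_Dpow[OF assms(1) Dpow_L2[OF assms(2)], of j "- j"] by (simp add: Dpow_Dpow)

lemma l2_norm_Dpow:
  assumes "f \<in> L2"
  shows "l2_norm (Dpow j f) = l2_norm f"
proof -
  have "(l2_norm (Dpow j f))^2 = (l2_norm f)^2"
    using l2_inner_Dpow_Dpow[OF assms assms, of j] by (simp add: l2_norm_sq_eq_Re)
  then show ?thesis
    by (simp add: power2_eq_iff_nonneg)
qed

lemma aeq_Dpow:
  assumes "f \<in> L2" "g \<in> L2" "aeq f g"
  shows "aeq (Dpow j f) (Dpow j g)"
proof -
  have d: "(\<lambda>x. f x - g x) \<in> L2"
    using assms(1,2) by (rule L2_diff)
  have "l2_norm (\<lambda>x. f x - g x) = 0"
    using l2_norm_eq_0_iff[OF d] assms(3) by (simp add: aeq_diff_eq_0_iff)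
  then have "l2_norm (Dpow j (\<lambda>x. f x - g x)) = 0"
    by (simp add: l2_norm_Dpow[OF d])
  then have "aeq (Dpow j (\<lambda>x. f x - g x)) (\<lambda>x. 0)"
    using l2_norm_eq_0_iff[OF Dpow_L2[OF d]] by simp
  then show ?thesis
    by (simp add: Dpow_diff aeq_diff_eq_0_iff)
qed

lemma Dpow_mem_l2_orth:
  assumes A: "A \<subseteq> L2" and inv: "\<And>a. a \<in> A \<Longrightarrow> Dpow (- j) a \<in> A" and f: "f \<in> l2_orth A"
  shows "Dpow j f \<in> l2_orth A"
proof -
  have f_L2: "f \<in> L2"
    using f by (rule l2_orth_L2)
  have "l2_inner a (Dpow j f) = 0" if "a \<in> A" for a
  proof -
    have "l2_inner (Dpow j f) a = l2_inner f (Dpow (- j) a)"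
      using f_L2 A that by (intro l2_inner_Dpow_left) auto
    also have "\<dots> = 0"
      by (rule l2_inner_eq_0_swap) (use f inv[OF that] in \<open>simp add: l2_orth_def\<close>)
    finally show ?thesis
      by (rule l2_inner_eq_0_swap)
  qed
  with f_L2 show ?thesis
    by (simp add: l2_orth_def Dpow_L2)
qed

section \<open>Restrictions of A\<close>

definition D_minus_I :: "cfun \<Rightarrow> cfun" where
  "D_minus_I g = (\<lambda>x. Dpow 1 g x - g x)"

definition iD_plus_I :: "cfun \<Rightarrow> cfun" where
  "iD_plus_I g = (\<lambda>x. \<i> * (Dpow 1 g x + g x))"

lemma D_minus_I_L2: "g \<in> L2 \<Longrightarrow> D_minus_I g \<in> L2"
  unfolding D_minus_I_def by (intro L2_diff Dpow_L2)

lemma iD_plus_I_L2: "g \<in> L2 \<Longrightarrow> iD_plus_I g \<in> L2"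
  unfolding iD_plus_I_def by (intro L2_scale L2_add Dpow_L2)

lemma D_minus_I_linear:
  "D_minus_I (\<lambda>x. f x + g x) = (\<lambda>x. D_minus_I f x + D_minus_I g x)"
  "D_minus_I (\<lambda>x. f x - g x) = (\<lambda>x. D_minus_I f x - D_minus_I g x)"
  "D_minus_I (\<lambda>x. c * f x) = (\<lambda>x. c * D_minus_I f x)"
  by (simp_all add: D_minus_I_def Dpow_add Dpow_diff Dpow_scale algebra_simps)

lemma iD_plus_I_linear:
  "iD_plus_I (\<lambda>x. f x + g x) = (\<lambda>x. iD_plus_I f x + iD_plus_I g x)"
  "iD_plus_I (\<lambda>x. f x - g x) = (\<lambda>x. iD_plus_I f x - iD_plus_I g x)"
  "iD_plus_I (\<lambda>x. c * f x) = (\<lambda>x. c * iD_plus_I f x)"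
  by (simp_all add: iD_plus_I_def Dpow_add Dpow_diff Dpow_scale algebra_simps)

lemma iD_plus_I_minus_D_minus_I: "(\<lambda>x. iD_plus_I g x - \<i> * D_minus_I g x) = (\<lambda>x. 2 * \<i> * g x)"
  and iD_plus_I_plus_D_minus_I: "(\<lambda>x. iD_plus_I g x + \<i> * D_minus_I g x) = (\<lambda>x. 2 * \<i> * Dpow 1 g x)"
  by (simp_all add: iD_plus_I_def D_minus_I_def algebra_simps)

lemma l2_inner_D_minus_I_iD_plus_I:
  assumes "g \<in> L2" "v \<in> L2"
  shows "l2_inner (D_minus_I g) v = l2_inner (Dpow 1 g) v - l2_inner g v"
    and "l2_inner (iD_plus_I g) v = \<i> * (l2_inner (Dpow 1 g) v + l2_inner g v)"
  using assms
  by (simp_all add: D_minus_I_def iD_plus_I_def l2_inner_diff_left l2_inner_add_left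
      l2_inner_scale_left Dpow_L2 L2_add)

lemma aeq_D_minus_I_iD_plus_I:
  assumes "g \<in> L2" "g' \<in> L2" "aeq g g'"
  shows "aeq (D_minus_I g) (D_minus_I g')" "aeq (iD_plus_I g) (iD_plus_I g')"
proof -
  have "AE x in lborel. Dpow 1 g x = Dpow 1 g' x" "AE x in lborel. g x = g' x"
    using aeq_Dpow[OF assms, of 1] assms(3) by (simp_all add: aeq_def)
  then show "aeq (D_minus_I g) (D_minus_I g')" "aeq (iD_plus_I g) (iD_plus_I g')"
    unfolding aeq_def D_minus_I_def iD_plus_I_def by (eventually_elim, simp)+
qed

lemma l2_conv_D_minus_I_iD_plus_I:
  assumes gs: "\<And>n. gs n \<in> L2" and g: "g \<in> L2" and lim: "l2_conv gs g"
  shows "l2_conv (\<lambda>n. D_minus_I (gs n)) (D_minus_I g)" "l2_conv (\<lambda>n. iD_plus_I (gs n)) (iD_plus_I g)"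
proof -
  define d where "d n = (\<lambda>x. gs n x - g x)" for n
  have d_L2: "d n \<in> L2" for n
    unfolding d_def using gs g by (rule L2_diff)
  have zero: "(\<lambda>n. 2 * l2_norm (d n)) \<longlonglongrightarrow> 0"
    using tendsto_mult_right_zero[OF lim[unfolded l2_conv_def], of 2] by (simp add: d_def)
  have "norm (l2_norm (D_minus_I (d n))) \<le> 2 * l2_norm (d n)" for n
    using l2_norm_diff_le[OF Dpow_L2[OF d_L2] d_L2, of 1 n n] l2_norm_Dpow[OF d_L2, of 1 n]
    by (simp add: D_minus_I_def)
  then have "(\<lambda>n. l2_norm (D_minus_I (d n))) \<longlonglongrightarrow> 0"
    using Lim_null_comparison[OF always_eventually, of "\<lambda>n. l2_norm (D_minus_I (d n))"
        "\<lambda>n. 2 * l2_norm (d n)"] zero by blast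
  then show "l2_conv (\<lambda>n. D_minus_I (gs n)) (D_minus_I g)"
    by (simp add: l2_conv_def d_def D_minus_I_linear)
  have "norm (l2_norm (iD_plus_I (d n))) \<le> 2 * l2_norm (d n)" for n
    using l2_norm_triangle[OF Dpow_L2[OF d_L2] d_L2, of 1 n n] l2_norm_Dpow[OF d_L2, of 1 n]
    by (simp add: iD_plus_I_def l2_norm_scale)
  then have "(\<lambda>n. l2_norm (iD_plus_I (d n))) \<longlonglongrightarrow> 0"
    using Lim_null_comparison[OF always_eventually, of "\<lambda>n. l2_norm (iD_plus_I (d n))"
        "\<lambda>n. 2 * l2_norm (d n)"] zero by blast
  then show "l2_conv (\<lambda>n. iD_plus_I (gs n)) (iD_plus_I g)"
    by (simp add: l2_conv_def d_def iD_plus_I_linear)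
qed

lemma D_minus_I_iD_plus_I_mem:
  assumes V: "closed_l2_subspace V" and inv: "\<And>f. f \<in> V \<Longrightarrow> Dpow 1 f \<in> V" and g: "g \<in> V"
  shows "D_minus_I g \<in> V" "iD_plus_I g \<in> V"
  unfolding D_minus_I_def iD_plus_I_def
  by (rule closed_l2_subspace_diff[OF V inv[OF g] g],
      rule closed_l2_subspace_scale[OF V closed_l2_subspace_add[OF V inv[OF g] g]])

lemma complex_i_mult_eq_iff:
  fixes a b :: complex
  shows "\<i> * (a + b) = \<i> * (a - b) \<longleftrightarrow> b = 0"
    and "\<i> * (a + b) = - \<i> * (a - b) \<longleftrightarrow> a = 0"
proof -
  have "\<i> * (a + b) - \<i> * (a - b) = 2 * \<i> * b" "\<i> * (a + b) - - \<i> * (a - b) = 2 * \<i> * a"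
    by (simp_all add: algebra_simps)
  then show "\<i> * (a + b) = \<i> * (a - b) \<longleftrightarrow> b = 0" "\<i> * (a + b) = - \<i> * (a - b) \<longleftrightarrow> a = 0"
    by (metis right_minus_eq mult_eq_0_iff complex_i_not_zero zero_neq_numeral)+
qed

lemma aeq_0_if_orth_dense:
  assumes dense: "densely_defined G" and G: "Domain G \<subseteq> L2" and z: "z \<in> L2"
    and orth: "\<And>f. f \<in> Domain G \<Longrightarrow> l2_inner f z = 0"
  shows "aeq z (\<lambda>x. 0)"
proof (rule ccontr)
  assume "\<not> aeq z (\<lambda>x. 0)"
  then have pos: "l2_norm z > 0"
    using l2_norm_eq_0_iff[OF z] l2_norm_nonneg[of z] by linarith
  then obtain f where f: "f \<in> Domain G" "l2_norm (\<lambda>x. f x - z x) < l2_norm z"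
    using dense z unfolding densely_defined_def by blast
  have f_L2: "f \<in> L2"
    using f(1) G by blast
  have "(l2_norm z)^2 = cmod (l2_inner (\<lambda>x. f x - z x) z)"
    using orth[OF f(1)] by (simp add: l2_inner_diff_left[OF f_L2 z z] l2_inner_self norm_power)
  also have "\<dots> \<le> l2_norm (\<lambda>x. f x - z x) * l2_norm z"
    using l2_Cauchy_Schwarz[OF L2_diff[OF f_L2 z] z] .
  also have "\<dots> < (l2_norm z)^2"
    using f(2) pos by (simp add: power2_eq_square)
  finally show False by simp
qed

locale restriction_of_A =
  fixes S :: "(cfun \<times> cfun) set"
  assumes l2_op: "l2_op S" and closed: "closed_op S" and dense: "densely_defined S"
    and symmetric: "symmetric_op S" and subset_A: "S \<subseteq> A_graph"

begin

lemma S_L2: "(f, h) \<in> S \<Longrightarrow> f \<in> L2 \<and> h \<in> L2"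
  and S_zero: "((\<lambda>x. 0), (\<lambda>x. 0)) \<in> S"
  and S_add: "(f, h) \<in> S \<Longrightarrow> (g, k) \<in> S \<Longrightarrow> ((\<lambda>x. f x + g x), (\<lambda>x. h x + k x)) \<in> S"
  and S_scale: "(f, h) \<in> S \<Longrightarrow> ((\<lambda>x. c * f x), (\<lambda>x. c * h x)) \<in> S"
  and S_cong_aeq: "(f, h) \<in> S \<Longrightarrow> f' \<in> L2 \<Longrightarrow> h' \<in> L2 \<Longrightarrow> aeq f f' \<Longrightarrow> aeq h h' \<Longrightarrow> (f', h') \<in> S"
  using l2_op unfolding l2_op_def by blast+

text \<open>Since \<open>S \<subseteq> A\<close>, each pair of \<open>S\<close> is \<open>((D - I) g, i (D + I) g)\<close> up to null functions,
  for some \<open>g \<in> S_param\<close>.\<close>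

definition S_param :: "cfun set" where
  "S_param = {g \<in> L2. (D_minus_I g, iD_plus_I g) \<in> S}"

lemma S_param_L2: "g \<in> S_param \<Longrightarrow> g \<in> L2"
  and S_param_S: "g \<in> S_param \<Longrightarrow> (D_minus_I g, iD_plus_I g) \<in> S"
  by (simp_all add: S_param_def)

lemma S_paramE:
  assumes fh: "(f, h) \<in> S"
  obtains g where "g \<in> S_param" "aeq f (D_minus_I g)" "aeq h (iD_plus_I g)"
proof -
  obtain g where g: "g \<in> L2" "aeq f (D_minus_I g)" "aeq h (iD_plus_I g)"
    using fh subset_A unfolding A_graph_def D_minus_I_def iD_plus_I_def Dil_eq_Dpow_1 by blast
  then have "(D_minus_I g, iD_plus_I g) \<in> S"
    by (intro S_cong_aeq[OF fh] D_minus_I_L2 iD_plus_I_L2)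
  with g show thesis
    by (intro that) (simp_all add: S_param_def)
qed

lemma closed_S_param: "closed_l2_subspace S_param"
  unfolding closed_l2_subspace_def l2_subspace_def
proof (intro conjI ballI allI impI)
  show "S_param \<subseteq> L2"
    by (auto simp: S_param_def)
  have "D_minus_I (\<lambda>x. 0) = (\<lambda>x. 0)" "iD_plus_I (\<lambda>x. 0) = (\<lambda>x. 0)"
    by (simp_all add: D_minus_I_def iD_plus_I_def Dpow_def)
  then show "(\<lambda>x. 0) \<in> S_param"
    using S_zero L2_zero by (simp add: S_param_def)
next
  fix f g
  assume "f \<in> S_param" "g \<in> S_param"
  then show "(\<lambda>x. f x + g x) \<in> S_param"
    using S_add[of "D_minus_I f" "iD_plus_I f" "D_minus_I g" "iD_plus_I g"]
    by (simp add: S_param_def D_minus_I_linear iD_plus_I_linear L2_add)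
next
  fix c f
  assume "f \<in> S_param"
  then show "(\<lambda>x. c * f x) \<in> S_param"
    using S_scale[of "D_minus_I f" "iD_plus_I f" c]
    by (simp add: S_param_def D_minus_I_linear iD_plus_I_linear L2_scale)
next
  fix g g'
  assume g: "g \<in> S_param" and g': "g' \<in> L2" and gg': "aeq g g'"
  have "(D_minus_I g', iD_plus_I g') \<in> S"
    using S_cong_aeq[OF S_param_S[OF g] D_minus_I_L2[OF g'] iD_plus_I_L2[OF g']]
      aeq_D_minus_I_iD_plus_I[OF S_param_L2[OF g] g' gg'] by blast
  with g' show "g' \<in> S_param"
    by (simp add: S_param_def)
next
  fix gs g
  assume lim: "(\<forall>n. gs n \<in> S_param) \<and> g \<in> L2 \<and> l2_conv gs g"
  then have gs: "\<And>n. gs n \<in> L2"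
    by (simp add: S_param_def)
  have "(D_minus_I g, iD_plus_I g) \<in> S"
    using closed[unfolded closed_op_def, rule_format,
        of "\<lambda>n. D_minus_I (gs n)" "\<lambda>n. iD_plus_I (gs n)" "D_minus_I g" "iD_plus_I g"]
      lim l2_conv_D_minus_I_iD_plus_I[OF gs] D_minus_I_L2 iD_plus_I_L2
    by (simp add: S_param_def)
  with lim show "g \<in> S_param"
    by (simp add: S_param_def)
qed

lemma adjoint_opD: "(u, k) \<in> adjoint_op S \<Longrightarrow> (f, h) \<in> S \<Longrightarrow> l2_inner h u = l2_inner f k"
  and adjoint_op_L2: "(u, k) \<in> adjoint_op S \<Longrightarrow> u \<in> L2 \<and> k \<in> L2"
  by (auto simp: adjoint_op_def)

lemma defect_space_L2: "v \<in> defect_space S \<mu> \<Longrightarrow> v \<in> L2"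
  using adjoint_op_L2 by (auto simp: defect_space_def)

lemma adjoint_op_add:
  assumes uk: "(u, k) \<in> adjoint_op S" and uk': "(u', k') \<in> adjoint_op S"
  shows "((\<lambda>x. u x + u' x), (\<lambda>x. k x + k' x)) \<in> adjoint_op S"
proof -
  have L2: "u \<in> L2" "k \<in> L2" "u' \<in> L2" "k' \<in> L2"
    using uk uk' adjoint_op_L2 by auto
  have "l2_inner h (\<lambda>x. u x + u' x) = l2_inner f (\<lambda>x. k x + k' x)" if fh: "(f, h) \<in> S" for f h
    using adjoint_opD[OF uk fh] adjoint_opD[OF uk' fh] S_L2[OF fh] L2 by (simp add: l2_inner_add_right)
  with L2 show ?thesis
    by (auto simp: adjoint_op_def intro: L2_add)
qed

lemma adjoint_op_aeq_unique:
  assumes uk: "(u, k) \<in> adjoint_op S" and uk': "(u', k') \<in> adjoint_op S" and uu': "aeq u u'"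
  shows "aeq k k'"
proof -
  have L2: "u \<in> L2" "k \<in> L2" "u' \<in> L2" "k' \<in> L2"
    using uk uk' adjoint_op_L2 by auto
  have "l2_inner f (\<lambda>x. k x - k' x) = 0" if f: "f \<in> Domain S" for f
  proof -
    obtain h where fh: "(f, h) \<in> S"
      using f by blast
    have "l2_inner f k = l2_inner f k'"
      using adjoint_opD[OF uk fh] adjoint_opD[OF uk' fh] l2_inner_cong_aeq_right[OF L2(1,3) _ uu']
        S_L2[OF fh] by simp
    then show ?thesis
      using S_L2[OF fh] L2 by (simp add: l2_inner_diff_right)
  qed
  moreover have "Domain S \<subseteq> L2"
    using S_L2 by blast
  ultimately have "aeq (\<lambda>x. k x - k' x) (\<lambda>x. 0)"
    using L2_diff[OF L2(2,4)] by (intro aeq_0_if_orth_dense[OF dense])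
  then show ?thesis
    by (simp add: aeq_diff_eq_0_iff)
qed

lemma defect_space_iff:
  "v \<in> defect_space S \<mu> \<longleftrightarrow>
    v \<in> L2 \<and> (\<forall>g\<in>S_param. l2_inner (iD_plus_I g) v = cnj \<mu> * l2_inner (D_minus_I g) v)"
proof
  assume v: "v \<in> defect_space S \<mu>"
  then have adj: "(v, (\<lambda>x. \<mu> * v x)) \<in> adjoint_op S"
    by (simp add: defect_space_def)
  have "l2_inner (iD_plus_I g) v = cnj \<mu> * l2_inner (D_minus_I g) v" if "g \<in> S_param" for g
    using adjoint_opD[OF adj S_param_S[OF that]] by (simp add: l2_inner_scale_right)
  with v show "v \<in> L2 \<and> (\<forall>g\<in>S_param. l2_inner (iD_plus_I g) v = cnj \<mu> * l2_inner (D_minus_I g) v)"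
    using defect_space_L2 by blast
next
  assume v: "v \<in> L2 \<and> (\<forall>g\<in>S_param. l2_inner (iD_plus_I g) v = cnj \<mu> * l2_inner (D_minus_I g) v)"
  have "l2_inner h v = l2_inner f (\<lambda>x. \<mu> * v x)" if fh: "(f, h) \<in> S" for f h
  proof -
    obtain g where g: "g \<in> S_param" "aeq f (D_minus_I g)" "aeq h (iD_plus_I g)"
      using S_paramE[OF fh] .
    have "l2_inner h v = l2_inner (iD_plus_I g) v"
      using g S_L2[OF fh] v by (intro l2_inner_cong_aeq_left) (auto simp: S_param_def iD_plus_I_L2)
    moreover have "l2_inner f v = l2_inner (D_minus_I g) v"
      using g S_L2[OF fh] v by (intro l2_inner_cong_aeq_left) (auto simp: S_param_def D_minus_I_L2)
    ultimately show ?thesis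
      using v g(1) by (simp add: l2_inner_scale_right)
  qed
  with v show "v \<in> defect_space S \<mu>"
    by (auto simp: defect_space_def adjoint_op_def intro: L2_scale)
qed

lemma defect_space_minus_i_eq: "defect_space S (- \<i>) = l2_orth S_param"
proof -
  have "l2_inner (iD_plus_I g) v = cnj (- \<i>) * l2_inner (D_minus_I g) v \<longleftrightarrow> l2_inner g v = 0"
    if "g \<in> S_param" "v \<in> L2" for g v
    by (simp only: l2_inner_D_minus_I_iD_plus_I[OF S_param_L2[OF that(1)] that(2)]
        complex_cnj_minus complex_cnj_i minus_minus complex_i_mult_eq_iff)
  then show ?thesis
    unfolding set_eq_iff defect_space_iff l2_orth_def by blast
qed

lemma defect_space_i_eq: "defect_space S \<i> = l2_orth (Dpow 1 ` S_param)"
proof -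
  have "l2_inner (iD_plus_I g) v = cnj \<i> * l2_inner (D_minus_I g) v \<longleftrightarrow> l2_inner (Dpow 1 g) v = 0"
    if "g \<in> S_param" "v \<in> L2" for g v
    by (simp only: l2_inner_D_minus_I_iD_plus_I[OF S_param_L2[OF that(1)] that(2)]
        complex_cnj_i complex_i_mult_eq_iff)
  then show ?thesis
    unfolding set_eq_iff defect_space_iff l2_orth_def by blast
qed

lemma S_param_eq: "S_param = l2_orth (defect_space S (- \<i>))"
  by (simp add: defect_space_minus_i_eq l2_orth_l2_orth[OF closed_S_param])

lemma Dpow_1_mem_defect_space_i:
  assumes "v \<in> defect_space S (- \<i>)"
  shows "Dpow 1 v \<in> defect_space S \<i>"
proof -
  have v: "v \<in> l2_orth S_param"
    using assms by (simp add: defect_space_minus_i_eq)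
  have "l2_inner (Dpow 1 g) (Dpow 1 v) = 0" if "g \<in> S_param" for g
    using v that by (simp add: l2_inner_Dpow_Dpow S_param_L2 l2_orth_def)
  with v show ?thesis
    by (auto simp: defect_space_i_eq l2_orth_def Dpow_L2)
qed

lemma mem_S_if_aeq_D_minus_I:
  assumes y: "y \<in> S_param" and g: "g \<in> L2" and k: "k \<in> L2"
    and kd: "\<And>x. k x - iD_plus_I y x = - \<i> * (g x - D_minus_I y x)"
    and d0: "aeq (\<lambda>x. g x - D_minus_I y x) (\<lambda>x. 0)"
  shows "(g, k) \<in> S"
proof -
  have "aeq (D_minus_I y) g"
    using d0 aeq_sym[of g "D_minus_I y"] by (simp add: aeq_diff_eq_0_iff)
  moreover have "aeq (iD_plus_I y) k"
    using d0 unfolding aeq_def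
  proof eventually_elim
    case (elim x)
    then show ?case
      using kd[of x] by simp
  qed
  ultimately show ?thesis
    using S_cong_aeq[OF S_param_S[OF y] g k] by blast
qed

end

section \<open>The Phillips condition\<close>

lemma le_0_if_le_scaled:
  fixes x B :: real
  assumes le: "\<And>q. 0 < q \<Longrightarrow> q \<le> 1/2 \<Longrightarrow> x \<le> q * B"
  shows "x \<le> 0"
proof (rule field_le_epsilon)
  fix e :: real
  assume e: "0 < e"
  define q where "q = min (1/2) (e / (\<bar>B\<bar> + 1))"
  have "0 < e / (\<bar>B\<bar> + 1)"
    using e by (simp add: add_pos_nonneg)
  then have "0 < q"
    by (simp add: q_def)
  moreover have "q \<le> 1/2" "q \<le> e / (\<bar>B\<bar> + 1)"
    unfolding q_def by (rule min.cobounded1, rule min.cobounded2)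
  ultimately have q: "0 < q" "q \<le> 1/2" "q \<le> e / (\<bar>B\<bar> + 1)"
    by blast+
  have "x \<le> q * B"
    using q(1,2) by (rule le)
  also have "\<dots> \<le> q * \<bar>B\<bar>"
    using q(1) by (intro mult_left_mono) auto
  also have "\<dots> \<le> e / (\<bar>B\<bar> + 1) * (\<bar>B\<bar> + 1)"
    using q(1,3) by (intro mult_mono) auto
  also have "\<dots> = e"
    by simp
  finally show "x \<le> 0 + e"
    by simp
qed

lemma l2_inner_Dpow_resolvent:
  assumes g: "g \<in> L2" and h: "h \<in> L2" and v: "v \<in> L2"
    and eq: "aeq g (\<lambda>x. Q * h x - Q * Dpow 1 g x)"
  shows "l2_inner (Dpow m g) v = Q * l2_inner (Dpow m h) v - Q * l2_inner (Dpow (m + 1) g) v"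
proof -
  have r: "(\<lambda>x. Q * h x - Q * Dpow 1 g x) \<in> L2"
    using g h by (intro L2_diff L2_scale Dpow_L2)
  have "Dpow m (\<lambda>x. Q * h x - Q * Dpow 1 g x) = (\<lambda>x. Q * Dpow m h x - Q * Dpow (m + 1) g x)"
    by (simp add: Dpow_diff Dpow_scale Dpow_Dpow)
  then have "l2_inner (Dpow m g) v = l2_inner (\<lambda>x. Q * Dpow m h x - Q * Dpow (m + 1) g x) v"
    using l2_inner_cong_aeq_left[OF Dpow_L2[OF g] Dpow_L2[OF r] v aeq_Dpow[OF g r eq]] by simp
  also have "\<dots> = Q * l2_inner (Dpow m h) v - Q * l2_inner (Dpow (m + 1) g) v"
    using g h v by (simp add: l2_inner_diff_left L2_scale Dpow_L2 l2_inner_scale_left)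
  finally show ?thesis .
qed

lemma l2_inner_Dpow_resolvent_shift:
  assumes g: "g \<in> L2" and h: "h \<in> L2" and v: "v \<in> L2"
    and eq: "aeq g (\<lambda>x. Q * h x - Q * Dpow 1 g x)" and Q: "Q \<noteq> 0"
    and g_v: "l2_inner g v = 0" and h_v: "\<And>m. m < n \<Longrightarrow> l2_inner (Dpow (int m) h) v = 0"
  shows "l2_inner (Dpow (int n) h) v = l2_inner (Dpow (int n + 1) g) v"
proof -
  note step = l2_inner_Dpow_resolvent[OF g h v eq]
  have "l2_inner (Dpow (int m) g) v = 0" if "m \<le> n" for m
    using that
  proof (induction m)
    case 0
    show ?case
      using g_v by simp
  next
    case (Suc m)
    then have "l2_inner (Dpow (int m) g) v = - Q * l2_inner (Dpow (int m + 1) g) v"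
      using step[of "int m"] h_v[of m] by simp
    with Suc Q show ?case
      by (simp add: add.commute)
  qed
  then show ?thesis
    using step[of "int n"] Q by simp
qed

lemma l2_norm_resolvent_le:
  assumes g: "g \<in> L2" and h: "h \<in> L2" and q: "0 < q" "q \<le> 1/2"
    and eq: "aeq g (\<lambda>x. of_real q * h x - of_real q * Dpow 1 g x)"
  shows "l2_norm g \<le> 2 * q * l2_norm h"
proof -
  have "l2_norm g = l2_norm (\<lambda>x. of_real q * h x - of_real q * Dpow 1 g x)"
    using g h eq by (intro l2_norm_cong_aeq L2_diff L2_scale Dpow_L2)
  also have "\<dots> \<le> q * l2_norm h + q * l2_norm g"
    using l2_norm_diff_le[OF L2_scale[OF h] L2_scale[OF Dpow_L2[OF g]], of "of_real q" "of_real q" 1] q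
    by (simp add: l2_norm_scale l2_norm_Dpow[OF g])
  finally have "l2_norm g \<le> q * l2_norm h + q * l2_norm g" .
  moreover have "q * l2_norm g \<le> 1/2 * l2_norm g"
    using q by (intro mult_right_mono) auto
  ultimately show ?thesis
    by linarith
qed

lemma resolvent_identity:
  fixes a b h :: complex and q r :: real
  assumes r: "0 < r" "(1 + r) * q = 1 - r"
    and eq: "\<i> * h = \<i> * (a + b) + \<i> * of_real r * (h - (a - b))"
  shows "b = of_real q * h - of_real q * a"
proof -
  define c :: complex where "c = of_real r"
  have c: "(1 + c) * of_real q = 1 - c"
    using arg_cong[OF r(2), of complex_of_real] by (simp add: c_def)
  have c_nz: "1 + c \<noteq> 0"
    using r(1) unfolding c_def by (metis of_real_1 of_real_add of_real_eq_0_iff add_pos_pos zero_less_one less_irrefl)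
  have "\<i> * (h - ((a + b) + c * (h - (a - b)))) = \<i> * h - (\<i> * (a + b) + \<i> * c * (h - (a - b)))"
    by (simp add: algebra_simps)
  then have "h - ((a + b) + c * (h - (a - b))) = 0"
    using eq by (simp add: c_def)
  moreover have "(1 - c) * (h - a) - (1 + c) * b = h - ((a + b) + c * (h - (a - b)))"
    by (simp add: algebra_simps)
  ultimately have "(1 + c) * b = (1 - c) * (h - a)"
    by simp
  also have "\<dots> = (1 + c) * (of_real q * (h - a))"
    using c by (simp add: mult.assoc[symmetric])
  finally have "b = of_real q * (h - a)"
    using mult_left_cancel[OF c_nz] by blast
  then show ?thesis
    by (simp add: right_diff_distrib)
qed

lemma phillips_symmetric_defect_decomposition:
  assumes S: "phillips_symmetric S Gm Gp" and \<mu>: "Im \<mu> > 0" and h: "h \<in> defect_space S \<i>"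
  shows "\<exists>s v. s \<in> Domain S \<and> v \<in> defect_space S \<mu> \<and> aeq h (\<lambda>x. s x + v x)"
proof -
  obtain \<Theta> where \<Theta>: "\<And>\<mu>. Im \<mu> > 0 \<Longrightarrow> is_char_fun_value S Gm Gp \<mu> \<Theta>"
    using S unfolding phillips_symmetric_def by blast
  let ?N = "\<lambda>\<mu>. {f \<in> L2. \<exists>s v. s \<in> Domain S \<and> v \<in> defect_space S \<mu> \<and> aeq f (\<lambda>x. s x + v x)}"
  have "?N \<mu> = ?N \<i>"
    using \<Theta>[OF \<mu>] \<Theta>[of \<i>] unfolding is_char_fun_value_def by simp
  moreover have "(\<lambda>x. 0) \<in> Domain S"
    using S unfolding phillips_symmetric_def l2_op_def by blast
  moreover have "h \<in> L2"
    using h unfolding defect_space_def adjoint_op_def by blast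
  ultimately have "h \<in> ?N \<mu>"
    using h by (simp only:) (intro CollectI conjI exI[of _ "\<lambda>x. 0"] exI[of _ h]; simp)
  then show ?thesis
    by blast
qed

text \<open>Constancy of the characteristic function on the upper half-plane means that
  \<open>D(S) \<dotplus> \<N>\<^sub>\<mu>\<close> does not depend on \<open>\<mu>\<close>; only the inclusion \<open>\<N>\<^sub>i \<subseteq> D(S) \<dotplus> \<N>\<^sub>\<mu>\<close> is used.\<close>

locale phillips_restriction_of_A = restriction_of_A +
  assumes defect_decomposition: "\<And>\<mu> h. Im \<mu> > 0 \<Longrightarrow> h \<in> defect_space S \<i> \<Longrightarrow>
    \<exists>s v. s \<in> Domain S \<and> v \<in> defect_space S \<mu> \<and> aeq h (\<lambda>x. s x + v x)"

begin

lemma defect_space_i_resolvent: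
  assumes h: "h \<in> defect_space S \<i>" and q: "0 < q" "q < 1"
  obtains g where "g \<in> S_param" "aeq g (\<lambda>x. of_real q * h x - of_real q * Dpow 1 g x)"
proof -
  define r :: real where "r = (1 - q) / (1 + q)"
  have r: "r > 0" "(1 + r) * q = 1 - r"
    using q by (simp_all add: r_def field_simps)
  define \<mu> where "\<mu> = \<i> * complex_of_real r"
  have "Im \<mu> > 0"
    using r by (simp add: \<mu>_def)
  then obtain s v where s: "s \<in> Domain S" and v: "v \<in> defect_space S \<mu>" and hsv: "aeq h (\<lambda>x. s x + v x)"
    using defect_decomposition h by blast
  obtain t where st: "(s, t) \<in> S"
    using s by blast
  obtain g where g: "g \<in> S_param" "aeq s (D_minus_I g)" "aeq t (iD_plus_I g)"
    using S_paramE[OF st] .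
  have "(s, t) \<in> adjoint_op S"
    using symmetric st by (auto simp: symmetric_op_def)
  moreover have "(v, (\<lambda>x. \<mu> * v x)) \<in> adjoint_op S"
    using v by (simp add: defect_space_def)
  ultimately have "((\<lambda>x. s x + v x), (\<lambda>x. t x + \<mu> * v x)) \<in> adjoint_op S"
    by (rule adjoint_op_add)
  moreover have "(h, (\<lambda>x. \<i> * h x)) \<in> adjoint_op S"
    using h by (simp add: defect_space_def)
  ultimately have "aeq (\<lambda>x. t x + \<mu> * v x) (\<lambda>x. \<i> * h x)"
    by (rule adjoint_op_aeq_unique[OF _ _ aeq_sym[OF hsv]])
  then have "AE x in lborel. g x = of_real q * h x - of_real q * Dpow 1 g x"
    using hsv g(2,3) unfolding aeq_def
  proof eventually_elim
    case (elim x)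
    have "v x = h x - (Dpow 1 g x - g x)"
      using elim(2,3) by (simp add: D_minus_I_def)
    then have "\<i> * h x = \<i> * (Dpow 1 g x + g x) + \<i> * of_real r * (h x - (Dpow 1 g x - g x))"
      using elim(1,4) by (simp add: \<mu>_def iD_plus_I_def)
    then show ?case
      by (rule resolvent_identity[OF r])
  qed
  then have "aeq g (\<lambda>x. of_real q * h x - of_real q * Dpow 1 g x)"
    by (simp add: aeq_def)
  with g(1) show thesis
    by (rule that)
qed

lemma Dpow_defect_space_i_orth:
  assumes h: "h \<in> defect_space S \<i>" and v: "v \<in> defect_space S (- \<i>)"
  shows "l2_inner (Dpow (int n) h) v = 0"
proof (induction n rule: less_induct)
  case (less n)
  have h_L2: "h \<in> L2" and v_L2: "v \<in> L2"
    using h v by (simp_all add: defect_space_L2)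
  have "cmod (l2_inner (Dpow (int n) h) v) \<le> q * (2 * l2_norm h * l2_norm v)"
    if q: "0 < q" "q \<le> 1/2" for q
  proof -
    obtain g where g: "g \<in> S_param" "aeq g (\<lambda>x. of_real q * h x - of_real q * Dpow 1 g x)"
      using defect_space_i_resolvent[OF h, of q] q by auto
    have g_L2: "g \<in> L2"
      using g(1) by (rule S_param_L2)
    have "l2_inner (Dpow (int n) h) v = l2_inner (Dpow (int n + 1) g) v"
      using g(1) v less.IH q(1)
      by (intro l2_inner_Dpow_resolvent_shift[OF g_L2 h_L2 v_L2 g(2)])
        (simp_all add: defect_space_minus_i_eq l2_orth_def)
    then have "cmod (l2_inner (Dpow (int n) h) v) \<le> l2_norm g * l2_norm v"
      using l2_Cauchy_Schwarz[OF Dpow_L2[OF g_L2] v_L2, of "int n + 1"] l2_norm_Dpow[OF g_L2] by simp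
    also have "\<dots> \<le> 2 * q * l2_norm h * l2_norm v"
      using l2_norm_resolvent_le[OF g_L2 h_L2 q g(2)] by (intro mult_right_mono) auto
    finally show ?thesis
      by (simp add: mult_ac)
  qed
  then have "cmod (l2_inner (Dpow (int n) h) v) \<le> 0"
    by (rule le_0_if_le_scaled)
  then show ?case
    by simp
qed

lemma Dpow_defect_space_minus_i_orth:
  assumes u: "u \<in> defect_space S (- \<i>)" and v: "v \<in> defect_space S (- \<i>)" and j: "j > 0"
  shows "l2_inner (Dpow j u) v = 0"
proof -
  define n where "n = nat (j - 1)"
  have "j = int n + 1"
    using j by (simp add: n_def)
  then have "Dpow j u = Dpow (int n) (Dpow 1 u)"
    by (simp add: Dpow_Dpow)
  then show ?thesis
    using Dpow_defect_space_i_orth[OF Dpow_1_mem_defect_space_i[OF u] v] by simp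
qed

end

section \<open>The wavelet basis\<close>

locale simple_phillips_restriction_of_A = phillips_restriction_of_A +
  fixes \<psi> :: cfun
  assumes simple: "simple_op S"
    and onb: "onb_family (defect_space S (- \<i>)) (UNIV :: int set) (\<lambda>k. Tpow k \<psi>)"

begin

definition wavelet :: "int \<times> int \<Rightarrow> cfun" where
  "wavelet = (\<lambda>(j, k). Dpow j (Tpow k \<psi>))"

lemma Tpow_mem_defect_space: "Tpow k \<psi> \<in> defect_space S (- \<i>)"
  using onb unfolding onb_family_def by blast

lemma Tpow_L2: "Tpow k \<psi> \<in> L2"
  using Tpow_mem_defect_space by (rule defect_space_L2)

lemma wavelet_L2: "wavelet p \<in> L2"
  by (cases p) (simp add: wavelet_def Dpow_L2 Tpow_L2)

lemma wavelet_orthonormal: "l2_inner (wavelet p) (wavelet p') = (if p = p' then 1 else 0)"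
proof -
  have lower: "l2_inner (wavelet (j, k)) (wavelet (j', k')) = 0" if "j' < j" for j k j' k'
  proof -
    have "l2_inner (wavelet (j, k)) (wavelet (j', k')) = l2_inner (Dpow (j - j') (Tpow k \<psi>)) (Tpow k' \<psi>)"
      using l2_inner_Dpow_Dpow[OF Dpow_L2[OF Tpow_L2] Tpow_L2, of j' "j - j'" k k']
      by (simp add: wavelet_def Dpow_Dpow)
    also have "\<dots> = 0"
      using that by (intro Dpow_defect_space_minus_i_orth Tpow_mem_defect_space) simp
    finally show ?thesis .
  qed
  obtain j k j' k' where p: "p = (j, k)" "p' = (j', k')"
    by fastforce
  consider "j' < j" | "j < j'" | "j = j'"
    by linarith
  then show ?thesis
  proof cases
    case 1
    then show ?thesis
      using lower[OF 1] p by simp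
  next
    case 2
    then show ?thesis
      using lower[OF 2, of k' k] l2_inner_commute[of "wavelet p" "wavelet p'"] p by simp
  next
    case 3
    have "l2_inner (Tpow k \<psi>) (Tpow k' \<psi>) = (if k = k' then 1 else 0)"
      using onb unfolding onb_family_def by blast
    with 3 show ?thesis
      using l2_inner_Dpow_Dpow[OF Tpow_L2 Tpow_L2] p by (simp add: wavelet_def)
  qed
qed

definition wavelet_perp :: "cfun set" where
  "wavelet_perp = l2_orth (range wavelet)"

lemma closed_wavelet_perp: "closed_l2_subspace wavelet_perp"
  unfolding wavelet_perp_def using wavelet_L2 by (intro closed_l2_subspace_l2_orth) auto

lemma wavelet_perp_L2: "f \<in> wavelet_perp \<Longrightarrow> f \<in> L2"
  using closed_l2_subspace_L2[OF closed_wavelet_perp] .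

lemma wavelet_perp_subset_S_param: "wavelet_perp \<subseteq> S_param"
proof -
  have "wavelet_perp \<subseteq> l2_orth (range (\<lambda>k. Tpow k \<psi>))"
    unfolding wavelet_perp_def by (rule l2_orth_antimono) (auto simp: wavelet_def intro: range_eqI[of _ _ "(0, k)" for k])
  also have "\<dots> \<subseteq> l2_orth (l2_span (\<lambda>k. Tpow k \<psi>))"
    by (rule l2_orth_range_subset_l2_orth_l2_span[OF Tpow_L2])
  also have "\<dots> \<subseteq> l2_orth (l2_closure (l2_span (\<lambda>k. Tpow k \<psi>)))"
    by (rule l2_orth_subset_l2_orth_l2_closure[OF l2_span_L2[OF Tpow_L2]])
  also have "\<dots> \<subseteq> l2_orth (defect_space S (- \<i>))"
    using onb_family_subset_l2_closure[OF onb] defect_space_L2 by (intro l2_orth_antimono) blast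
  also have "\<dots> = S_param"
    by (rule S_param_eq[symmetric])
  finally show ?thesis .
qed

lemma Dpow_mem_wavelet_perp: "f \<in> wavelet_perp \<Longrightarrow> Dpow m f \<in> wavelet_perp"
proof (unfold wavelet_perp_def, rule Dpow_mem_l2_orth)
  show "range wavelet \<subseteq> L2"
    using wavelet_L2 by auto
  fix a
  assume "a \<in> range wavelet"
  then obtain j k where "a = wavelet (j, k)"
    by (metis surj_pair rangeE)
  then have "Dpow (- m) a = wavelet (j - m, k)"
    by (simp add: wavelet_def Dpow_Dpow)
  then show "Dpow (- m) a \<in> range wavelet"
    by simp
qed

lemma Dpow_mem_l2_orth_wavelet_perp: "f \<in> l2_orth wavelet_perp \<Longrightarrow> Dpow m f \<in> l2_orth wavelet_perp"
  using wavelet_perp_L2 Dpow_mem_wavelet_perp by (intro Dpow_mem_l2_orth) auto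

lemma reduces_wavelet_perp: "reduces S wavelet_perp"
proof -
  have "\<exists>h1 h2. (f1, h1) \<in> S \<and> h1 \<in> wavelet_perp \<and> (f2, h2) \<in> S \<and> h2 \<in> l2_orth wavelet_perp"
    if fh: "(f, h) \<in> S" and f1: "f1 \<in> wavelet_perp" and f2: "f2 \<in> l2_orth wavelet_perp"
      and split: "aeq f (\<lambda>x. f1 x + f2 x)" for f h f1 f2
  proof -
    obtain g where g: "g \<in> S_param" "aeq f (D_minus_I g)"
      using S_paramE[OF fh] by blast
    obtain g1 where g1: "g1 \<in> wavelet_perp" and g2: "(\<lambda>x. g x - g1 x) \<in> l2_orth wavelet_perp"
      using l2_projection[OF closed_wavelet_perp S_param_L2[OF g(1)]] .
    define g2 where "g2 x = g x - g1 x" for x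
    have g1_S: "g1 \<in> S_param"
      using g1 wavelet_perp_subset_S_param by blast
    have g2_S: "g2 \<in> S_param"
      unfolding g2_def[abs_def] by (rule closed_l2_subspace_diff[OF closed_S_param g(1) g1_S])
    have orth_M: "closed_l2_subspace (l2_orth wavelet_perp)"
      using wavelet_perp_L2 by (intro closed_l2_subspace_l2_orth) auto
    have D1: "D_minus_I g1 \<in> wavelet_perp" "iD_plus_I g1 \<in> wavelet_perp"
      using D_minus_I_iD_plus_I_mem[OF closed_wavelet_perp Dpow_mem_wavelet_perp g1] by auto
    have D2: "D_minus_I g2 \<in> l2_orth wavelet_perp" "iD_plus_I g2 \<in> l2_orth wavelet_perp"
      using D_minus_I_iD_plus_I_mem[OF orth_M Dpow_mem_l2_orth_wavelet_perp g2] by (auto simp: g2_def[abs_def])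
    have "D_minus_I g = (\<lambda>x. D_minus_I g1 x + D_minus_I g2 x)"
      using D_minus_I_linear(1)[of g1 g2] by (simp add: g2_def)
    then have D_split: "D_minus_I g x = D_minus_I g1 x + D_minus_I g2 x" for x
      by simp
    have "aeq (\<lambda>x. (f1 x - D_minus_I g1 x) - (D_minus_I g2 x - f2 x)) (\<lambda>x. 0)"
      using split g(2) unfolding aeq_def
    proof eventually_elim
      case (elim x)
      then show ?case
        using D_split[of x] by (simp add: algebra_simps)
    qed
    then have "aeq (\<lambda>x. f1 x - D_minus_I g1 x) (\<lambda>x. D_minus_I g2 x - f2 x)"
      by (simp add: aeq_diff_eq_0_iff)
    then have "aeq (\<lambda>x. f1 x - D_minus_I g1 x) (\<lambda>x. 0)"
      by (rule aeq_0_if_aeq_l2_orth[OF closed_wavelet_perp closed_l2_subspace_diff[OF closed_wavelet_perp f1 D1(1)]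
          closed_l2_subspace_diff[OF orth_M D2(1) f2]])
    with \<open>aeq (\<lambda>x. f1 x - D_minus_I g1 x) (\<lambda>x. D_minus_I g2 x - f2 x)\<close>
    have null: "aeq (\<lambda>x. f1 x - D_minus_I g1 x) (\<lambda>x. 0)" "aeq (\<lambda>x. D_minus_I g2 x - f2 x) (\<lambda>x. 0)"
      by (simp, rule aeq_trans[OF aeq_sym])
    have "(f1, iD_plus_I g1) \<in> S"
      using null(1) wavelet_perp_L2[OF f1] iD_plus_I_L2[OF S_param_L2[OF g1_S]]
      by (intro S_cong_aeq[OF S_param_S[OF g1_S]]) (simp_all add: aeq_diff_eq_0_iff aeq_sym)
    moreover have "(f2, iD_plus_I g2) \<in> S"
      using null(2) l2_orth_L2[OF f2] iD_plus_I_L2[OF S_param_L2[OF g2_S]]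
      by (intro S_cong_aeq[OF S_param_S[OF g2_S]]) (simp_all add: aeq_diff_eq_0_iff)
    ultimately show ?thesis
      using D1(2) D2(2) by blast
  qed
  with closed_wavelet_perp show ?thesis
    unfolding reduces_def by blast
qed

text \<open>Inside \<open>wavelet_perp\<subseteq>S_param\<close> the operator \<open>S\<close> agrees with the self-adjoint \<open>A\<close>, so \<open>S - iI\<close> maps onto \<open>wavelet_perp\<close>.\<close>

lemma aeq_0_if_orth_S_minus_i_wavelet_perp:
  assumes d: "d \<in> wavelet_perp"
    and orth: "\<And>f h. (f, h) \<in> S \<Longrightarrow> f \<in> wavelet_perp \<Longrightarrow> h \<in> wavelet_perp \<Longrightarrow> l2_inner (\<lambda>x. h x - \<i> * f x) d = 0"
  shows "aeq d (\<lambda>x. 0)"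
proof -
  define y where "y x = (1 / (2 * \<i>)) * d x" for x
  have y: "y \<in> wavelet_perp"
    unfolding y_def[abs_def] by (rule closed_l2_subspace_scale[OF closed_wavelet_perp d])
  have "(\<lambda>x. iD_plus_I y x - \<i> * D_minus_I y x) = d"
    unfolding iD_plus_I_minus_D_minus_I by (simp add: y_def)
  then have "l2_inner d d = 0"
    using orth[OF S_param_S D_minus_I_iD_plus_I_mem[OF closed_wavelet_perp Dpow_mem_wavelet_perp y]] y wavelet_perp_subset_S_param by auto
  then show ?thesis
    using wavelet_perp_L2[OF d] by (intro l2_inner_self_eq_0D)
qed

lemma mem_S_if_adjoint_in_wavelet_perp:
  assumes g: "g \<in> wavelet_perp" and k: "k \<in> wavelet_perp"
    and adj: "\<And>f h. (f, h) \<in> S \<Longrightarrow> f \<in> wavelet_perp \<Longrightarrow> h \<in> wavelet_perp \<Longrightarrow> l2_inner h g = l2_inner f k"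
  shows "(g, k) \<in> S"
proof -
  have g_L2: "g \<in> L2" and k_L2: "k \<in> L2"
    using g k by (simp_all add: wavelet_perp_L2)
  define w where "w x = (1 / (2 * \<i>)) * (k x + \<i> * g x)" for x
  define y where "y = Dpow (-1) w"
  have y: "y \<in> wavelet_perp"
    unfolding y_def w_def[abs_def]
    by (intro Dpow_mem_wavelet_perp closed_l2_subspace_scale[OF closed_wavelet_perp] closed_l2_subspace_add[OF closed_wavelet_perp] k
        closed_l2_subspace_scale[OF closed_wavelet_perp] g)
  then have y_param: "y \<in> S_param"
    using wavelet_perp_subset_S_param by blast
  then have y_S: "(D_minus_I y, iD_plus_I y) \<in> S" and y_L2: "y \<in> L2"
    by (rule S_param_S, rule S_param_L2)
  define d where "d x = g x - D_minus_I y x" for x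
  have d: "d \<in> wavelet_perp"
    unfolding d_def[abs_def]
    by (rule closed_l2_subspace_diff[OF closed_wavelet_perp g D_minus_I_iD_plus_I_mem(1)[OF closed_wavelet_perp Dpow_mem_wavelet_perp y]])
  have kd: "(\<lambda>x. k x - iD_plus_I y x) = (\<lambda>x. - \<i> * d x)"
  proof (rule ext)
    fix x
    have "iD_plus_I y x + \<i> * D_minus_I y x = k x + \<i> * g x"
      using fun_cong[OF iD_plus_I_plus_D_minus_I[of y], of x] by (simp add: y_def w_def Dpow_Dpow)
    then show "k x - iD_plus_I y x = - \<i> * d x"
      by (simp add: d_def algebra_simps)
  qed
  have "l2_inner (\<lambda>x. h x - \<i> * f x) d = 0" if fh: "(f, h) \<in> S" "f \<in> wavelet_perp" "h \<in> wavelet_perp" for f h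
  proof -
    have f_L2: "f \<in> L2" and h_L2: "h \<in> L2"
      using fh by (simp_all add: wavelet_perp_L2)
    have "(D_minus_I y, iD_plus_I y) \<in> adjoint_op S"
      using symmetric y_S unfolding symmetric_op_def by blast
    then have "l2_inner h d = l2_inner f (\<lambda>x. k x - iD_plus_I y x)"
      using adj[OF fh] adjoint_opD[OF _ fh(1)] f_L2 h_L2 g_L2 k_L2 y_L2
      by (simp add: d_def[abs_def] l2_inner_diff_right D_minus_I_L2 iD_plus_I_L2)
    also have "\<dots> = \<i> * l2_inner f d"
      unfolding kd by (simp add: l2_inner_scale_right)
    finally show ?thesis
      using f_L2 h_L2 wavelet_perp_L2[OF d] by (simp add: l2_inner_diff_left L2_scale l2_inner_scale_left)
  qed
  then have "aeq d (\<lambda>x. 0)"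
    by (rule aeq_0_if_orth_S_minus_i_wavelet_perp[OF d])
  show ?thesis
  proof (rule mem_S_if_aeq_D_minus_I[OF y_param g_L2 k_L2])
    show "k x - iD_plus_I y x = - \<i> * (g x - D_minus_I y x)" for x
      using fun_cong[OF kd, of x] by (simp add: d_def)
    show "aeq (\<lambda>x. g x - D_minus_I y x) (\<lambda>x. 0)"
      using \<open>aeq d (\<lambda>x. 0)\<close> by (simp add: d_def[abs_def])
  qed
qed

lemma selfadjoint_wavelet_perp: "selfadjoint_in wavelet_perp (S \<inter> (wavelet_perp \<times> wavelet_perp))"
  unfolding selfadjoint_in_def
proof (intro set_eqI iffI)
  fix p
  assume p: "p \<in> S \<inter> wavelet_perp \<times> wavelet_perp"
  then obtain g k where gk: "p = (g, k)" "(g, k) \<in> S" "g \<in> wavelet_perp" "k \<in> wavelet_perp"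
    by auto
  then have "(g, k) \<in> adjoint_op S"
    using symmetric unfolding symmetric_op_def by blast
  with gk show "p \<in> {(g, k). g \<in> wavelet_perp \<and> k \<in> wavelet_perp \<and> (\<forall>(f, h)\<in>S \<inter> wavelet_perp \<times> wavelet_perp. l2_inner h g = l2_inner f k)}"
    by (auto dest: adjoint_opD)
next
  fix p
  assume "p \<in> {(g, k). g \<in> wavelet_perp \<and> k \<in> wavelet_perp \<and> (\<forall>(f, h)\<in>S \<inter> wavelet_perp \<times> wavelet_perp. l2_inner h g = l2_inner f k)}"
  then obtain g k where gk: "p = (g, k)" "g \<in> wavelet_perp" "k \<in> wavelet_perp"
    and adj: "\<forall>(f, h)\<in>S \<inter> wavelet_perp \<times> wavelet_perp. l2_inner h g = l2_inner f k"
    by blast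
  have "(g, k) \<in> S"
    using gk(2,3) by (rule mem_S_if_adjoint_in_wavelet_perp) (use adj in blast)
  with gk show "p \<in> S \<inter> wavelet_perp \<times> wavelet_perp"
    by blast
qed

lemma wavelet_perp_trivial:
  assumes "f \<in> wavelet_perp"
  shows "aeq f (\<lambda>x. 0)"
proof (rule ccontr)
  assume "\<not> aeq f (\<lambda>x. 0)"
  with assms reduces_wavelet_perp selfadjoint_wavelet_perp
  have "\<exists>M'. reduces S M' \<and> (\<exists>f\<in>M'. \<not> aeq f (\<lambda>x. 0)) \<and> selfadjoint_in M' (S \<inter> (M' \<times> M'))"
    by blast
  with simple show False
    unfolding simple_op_def by blast
qed

lemma onb_wavelet: "onb_family L2 UNIV wavelet"
proof (rule onb_familyI[OF wavelet_L2 wavelet_orthonormal])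
  have V: "closed_l2_subspace (l2_closure (l2_span wavelet))"
    by (rule closed_l2_subspace_l2_closure_l2_span[OF wavelet_L2])
  have "range wavelet \<subseteq> l2_closure (l2_span wavelet)"
    using range_subset_l2_span subset_l2_closure[OF l2_span_L2[OF wavelet_L2]] by (rule order_trans)
  then have "l2_orth (l2_closure (l2_span wavelet)) \<subseteq> wavelet_perp"
    unfolding wavelet_perp_def by (rule l2_orth_antimono)
  then show "L2 \<subseteq> l2_closure (l2_span wavelet)"
    using wavelet_perp_trivial by (intro L2_subset_if_l2_orth_trivial[OF V]) blast
qed

end

theorem proposition6p1:
  fixes S :: "(cfun \<times> cfun) set"
    and Gm Gp :: "cfun \<Rightarrow> 'i \<Rightarrow> complex"
    and \<psi> :: cfun
  assumes "phillips_symmetric S Gm Gp"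
    and "simple_op S"
    and "S \<subseteq> A_graph"
    and "\<psi> \<in> defect_space S (- \<i>)"
    and "onb_family (defect_space S (- \<i>)) (UNIV :: int set) (\<lambda>k. Tpow k \<psi>)"
  shows "onb_family L2 (UNIV :: (int \<times> int) set) (\<lambda>(j, k). Dpow j (Tpow k \<psi>))"
proof -
  have "l2_op S" "closed_op S" "densely_defined S" "symmetric_op S"
    using assms(1) unfolding phillips_symmetric_def by blast+
  then interpret simple_phillips_restriction_of_A S \<psi>
    using assms(2,3,5) phillips_symmetric_defect_decomposition[OF assms(1)]
    by unfold_locales blast+
  show ?thesis
    using onb_wavelet by (simp add: wavelet_def)
qed

end
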